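(* Let $\vartheta$ be a primitive semi-compatible random substitution on $\mathcal A=\{a_1,\dots,a_n\}$ with topological entropy $s$ and lower/upper inflation word entropies $\underline s_i^I$, $\overline s_i^I$. Then for all $1\leqslant i\leqslant n$ and all $m\in\mathbb N$, \[ \frac{1}{\lambda^m}\bm q_m^\intercal\bm R\;\leqslant\;\underline s_i^I\;\leqslant\;\overline s_i^I\;\leqslant\;s\;\leqslant\;\frac{1}{\lambda^m-1}\bm q_m^\intercal\bm R . \] In particular the limit $s^I=\lim_{m\to\infty}\frac{1}{\ell_{m,i}}\log(\#\vartheta^m(a_i))$ exists, is independent of $i$, and \[ s=s^I=\lim_{m\to\infty}\frac{1}{\lambda^m}\bm q_m^\intercal\bm R=\sup_{m\in\mathbb N}\frac{1}{\lambda^m}\bm q_m^\intercal\bm R . \]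
   Context: Let $\mathcal A=\{a_1,\dots,a_n\}$ be a finite alphabet, $\mathcal A^+$ the finite non-empty words over $\mathcal A$. A random substitution is a map $\vartheta$ from $\mathcal A$ to finite non-empty subsets of $\mathcal A^+$, extended to words by $\vartheta(u_1\cdots u_m)=\{w_1\cdots w_m: w_k\in\vartheta(u_k)\}$ and to sets of words by unions; powers $\vartheta^m$ are compositions. $|u|_a$ is the number of occurrences of letter $a$ in $u$; $\Phi(u)=(|u|_{a_1},\dots,|u|_{a_n})^\intercal$. $\vartheta$ is semi-compatible if for each $a$ all words in $\vartheta(a)$ have the same $\Phi$; then all words in $\vartheta^m(a_i)$ have a common length $\ell_{m,i}$. Substitution matrix $M_{ij}=|u|_{a_i}$, $u\in\vartheta(a_j)$; primitive means $M$ primitive, with Perron–Frobenius eigenvalue $\lambda$ and right PF eigenvector $\bm R$, $\|\bm R\|_1=1$. $q_{m,i}=\log\#\vartheta^m(a_i)$, $\bm q_m=(q_{m,1},\dots,q_{m,n})^\intercal$. $\underline s_i^I=\liminf_{m\to\infty}q_{m,i}/\ell_{m,i}$, $\overline s_i^I=\limsup_{m\to\infty}q_{m,i}/\ell_{m,i}$. The language $\mathcal L$ is the set of all subwords of words in $\vartheta^m(a)$, $a\in\mathcal A$, $m\in\mathbb N$; $\mathcal L_\ell$ its words of length $\ell$; topological entropy $s=\lim_{\ell\to\infty}\frac1\ell\log\#\mathcal L_\ell$. *)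

theory Defs
  imports "HOL-Analysis.Analysis" "HOL-Library.Liminf_Limsup"
begin

definition random_subst :: "('a \<Rightarrow> 'a list set) \<Rightarrow> bool" where
  "random_subst \<theta> \<longleftrightarrow> (\<forall>a. finite (\<theta> a) \<and> \<theta> a \<noteq> {} \<and> [] \<notin> \<theta> a)"

fun subst_word :: "('a \<Rightarrow> 'a list set) \<Rightarrow> 'a list \<Rightarrow> 'a list set" where
  "subst_word \<theta> [] = {[]}"
| "subst_word \<theta> (x # xs) = {v @ w | v w. v \<in> \<theta> x \<and> w \<in> subst_word \<theta> xs}"

definition subst_set :: "('a \<Rightarrow> 'a list set) \<Rightarrow> 'a list set \<Rightarrow> 'a list set" where
  "subst_set \<theta> U = (\<Union>u\<in>U. subst_word \<theta> u)"

definition subst_pow :: "('a \<Rightarrow> 'a list set) \<Rightarrow> nat \<Rightarrow> 'a \<Rightarrow> 'a list set" where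
  "subst_pow \<theta> m a = (subst_set \<theta> ^^ m) {[a]}"

definition semi_compatible :: "('a \<Rightarrow> 'a list set) \<Rightarrow> bool" where
  "semi_compatible \<theta> \<longleftrightarrow>
     (\<forall>a u v. u \<in> \<theta> a \<longrightarrow> v \<in> \<theta> a \<longrightarrow> (\<forall>b. count_list u b = count_list v b))"

definition subst_matrix :: "('a \<Rightarrow> 'a list set) \<Rightarrow> 'a \<Rightarrow> 'a \<Rightarrow> real" where
  "subst_matrix \<theta> i j = real (count_list (SOME u. u \<in> \<theta> j) i)"

definition mat_mult :: "('a::finite \<Rightarrow> 'a \<Rightarrow> real) \<Rightarrow> ('a \<Rightarrow> 'a \<Rightarrow> real) \<Rightarrow> 'a \<Rightarrow> 'a \<Rightarrow> real" where
  "mat_mult A B i j = (\<Sum>k\<in>UNIV. A i k * B k j)"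

fun mat_pow :: "('a::finite \<Rightarrow> 'a \<Rightarrow> real) \<Rightarrow> nat \<Rightarrow> 'a \<Rightarrow> 'a \<Rightarrow> real" where
  "mat_pow A 0 = (\<lambda>i j. if i = j then 1 else 0)"
| "mat_pow A (Suc k) = mat_mult A (mat_pow A k)"

definition primitive_mat :: "('a::finite \<Rightarrow> 'a \<Rightarrow> real) \<Rightarrow> bool" where
  "primitive_mat A \<longleftrightarrow> (\<forall>i j. A i j \<ge> 0) \<and> (\<exists>k>0. \<forall>i j. mat_pow A k i j > 0)"

definition primitive_subst :: "('a::finite \<Rightarrow> 'a list set) \<Rightarrow> bool" where
  "primitive_subst \<theta> \<longleftrightarrow> primitive_mat (subst_matrix \<theta>)"

definition mat_eigenvalues :: "('a::finite \<Rightarrow> 'a \<Rightarrow> real) \<Rightarrow> complex set" where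
  "mat_eigenvalues A = {z. \<exists>v::'a \<Rightarrow> complex. v \<noteq> (\<lambda>_. 0) \<and>
      (\<forall>i. (\<Sum>j\<in>UNIV. complex_of_real (A i j) * v j) = z * v i)}"

definition pf_eigenvalue :: "('a::finite \<Rightarrow> 'a \<Rightarrow> real) \<Rightarrow> real" where
  "pf_eigenvalue A = Sup (cmod ` mat_eigenvalues A)"

definition is_right_pf_vector :: "('a::finite \<Rightarrow> 'a \<Rightarrow> real) \<Rightarrow> ('a \<Rightarrow> real) \<Rightarrow> bool" where
  "is_right_pf_vector A R \<longleftrightarrow> (\<forall>i. R i \<ge> 0) \<and> (\<Sum>i\<in>UNIV. R i) = 1 \<and>
      (\<forall>i. (\<Sum>j\<in>UNIV. A i j * R j) = pf_eigenvalue A * R i)"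

text \<open>ell_{m,i}: common length of words in theta^m(a_i) (well defined by semi-compatibility).\<close>
definition ell :: "('a \<Rightarrow> 'a list set) \<Rightarrow> nat \<Rightarrow> 'a \<Rightarrow> nat" where
  "ell \<theta> m a = length (SOME w. w \<in> subst_pow \<theta> m a)"

definition qv :: "('a \<Rightarrow> 'a list set) \<Rightarrow> nat \<Rightarrow> 'a \<Rightarrow> real" where
  "qv \<theta> m a = ln (real (card (subst_pow \<theta> m a)))"

definition language :: "('a \<Rightarrow> 'a list set) \<Rightarrow> 'a list set" where
  "language \<theta> = {u. \<exists>m a w p s. w \<in> subst_pow \<theta> m a \<and> w = p @ u @ s}"

definition language_len :: "('a \<Rightarrow> 'a list set) \<Rightarrow> nat \<Rightarrow> 'a list set" where
  "language_len \<theta> l = {u \<in> language \<theta>. length u = l}"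

definition top_entropy :: "('a \<Rightarrow> 'a list set) \<Rightarrow> real" where
  "top_entropy \<theta> = lim (\<lambda>l. ln (real (card (language_len \<theta> l))) / real l)"

definition lower_infl_entropy :: "('a \<Rightarrow> 'a list set) \<Rightarrow> 'a \<Rightarrow> ereal" where
  "lower_infl_entropy \<theta> a = liminf (\<lambda>m. ereal (qv \<theta> m a / real (ell \<theta> m a)))"

definition upper_infl_entropy :: "('a \<Rightarrow> 'a list set) \<Rightarrow> 'a \<Rightarrow> ereal" where
  "upper_infl_entropy \<theta> a = limsup (\<lambda>m. ereal (qv \<theta> m a / real (ell \<theta> m a)))"

end

theory Submission
  imports Defs "HOL-Real_Asymp.Real_Asymp"
begin

text \<open>By semi-compatibility, every word of \<open>\<vartheta>\<^sup>m(a)\<close> has the letter counts of the \<open>a\<close>-th column of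
  \<open>M\<^sup>m\<close>. Hence \<open>\<vartheta>\<^sup>n\<^sup>+\<^sup>k(a)\<close> is the union, over \<open>u \<in> \<vartheta>\<^sup>k(a)\<close>, of the sets \<open>\<vartheta>\<^sup>n(u)\<close>, each of
  cardinality \<open>\<Prod>\<^sub>c #\<vartheta>\<^sup>n(c) ^ (M\<^sup>k)\<^sub>c\<^sub>a\<close>. Pairing with \<open>R\<close> gives
  \<open>\<lambda>\<^sup>k q\<^sub>n\<^sup>T R \<le> q\<^sub>n\<^sub>+\<^sub>k\<^sup>T R \<le> q\<^sub>k\<^sup>T R + \<lambda>\<^sup>k q\<^sub>n\<^sup>T R\<close>: so \<open>q\<^sub>m\<^sup>T R / \<lambda>\<^sup>m\<close> increases to its supremum
  \<open>s\<^sup>I\<close>, and iterating the upper bound along multiples of \<open>m\<close> bounds \<open>s\<^sup>I\<close> by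
  \<open>q\<^sub>m\<^sup>T R / (\<lambda>\<^sup>m - 1)\<close>. Perron--Frobenius convergence of the columns of \<open>M\<^sup>k / \<lambda>\<^sup>k\<close> turns the
  same two inequalities into \<open>q\<^sub>m\<^sub>,\<^sub>i / \<ell>\<^sub>m\<^sub>,\<^sub>i \<longrightarrow> s\<^sup>I\<close>. Finally, the complexity function of the
  language is submultiplicative and dominates \<open>#\<vartheta>\<^sup>n(a)\<close>, which gives \<open>s\<^sup>I \<le> s\<close>; conversely every
  long legal word is a window of some \<open>\<vartheta>\<^sup>n(v)\<close> with \<open>v\<close> short, which gives \<open>s \<le> s\<^sup>I\<close>. When
  \<open>\<lambda> = 1\<close> the substitution is deterministic and letter-to-letter, and everything vanishes.\<close>

section \<open>Iterated substitution of words\<close>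

lemma subst_word_Cons_iff:
  "z \<in> subst_word \<theta> (a # x) \<longleftrightarrow> (\<exists>v w. z = v @ w \<and> v \<in> \<theta> a \<and> w \<in> subst_word \<theta> x)"
  by simp

declare subst_word.simps(2)[simp del]

lemma subst_word_append:
  "subst_word \<theta> (x @ y) = {v @ w | v w. v \<in> subst_word \<theta> x \<and> w \<in> subst_word \<theta> y}"
proof (induction x)
  case Nil
  then show ?case by simp
next
  case (Cons a x)
  show ?case
  proof (rule set_eqI, rule iffI)
    fix z assume "z \<in> subst_word \<theta> ((a # x) @ y)"
    then obtain v w where z_eq: "z = v @ w" "v \<in> \<theta> a" "w \<in> subst_word \<theta> (x @ y)"
      unfolding append_Cons subst_word_Cons_iff by blast
    from z_eq(3) Cons obtain w1 w2 where split: "w = w1 @ w2" "w1 \<in> subst_word \<theta> x" "w2 \<in> subst_word \<theta> y"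
      by blast
    have "v @ w1 \<in> subst_word \<theta> (a # x)" unfolding subst_word_Cons_iff using z_eq split by blast
    moreover have "z = (v @ w1) @ w2" using z_eq split by simp
    ultimately show "z \<in> {v @ w |v w. v \<in> subst_word \<theta> (a # x) \<and> w \<in> subst_word \<theta> y}"
      using split by blast
  next
    fix z assume "z \<in> {v @ w |v w. v \<in> subst_word \<theta> (a # x) \<and> w \<in> subst_word \<theta> y}"
    then obtain v w where z_eq: "z = v @ w" "v \<in> subst_word \<theta> (a # x)" "w \<in> subst_word \<theta> y" by blast
    then obtain v1 v2 where split: "v = v1 @ v2" "v1 \<in> \<theta> a" "v2 \<in> subst_word \<theta> x"
      unfolding subst_word_Cons_iff by blast
    have "v2 @ w \<in> subst_word \<theta> (x @ y)" using Cons z_eq split by blast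
    moreover have "z = v1 @ (v2 @ w)" using z_eq split by simp
    ultimately show "z \<in> subst_word \<theta> ((a # x) @ y)"
      unfolding append_Cons subst_word_Cons_iff using split by blast
  qed
qed

lemma subst_word_Cons_image:
  "subst_word \<theta> (x # xs) = (\<lambda>(v, w). v @ w) ` (\<theta> x \<times> subst_word \<theta> xs)"
  unfolding subst_word_Cons_iff image_iff Bex_def set_eq_iff by auto

definition subst_iter :: "('a \<Rightarrow> 'a list set) \<Rightarrow> nat \<Rightarrow> 'a list \<Rightarrow> 'a list set" where
  "subst_iter \<theta> n u = (subst_set \<theta> ^^ n) {u}"

lemma subst_iter_0 [simp]: "subst_iter \<theta> 0 u = {u}"
  by (simp add: subst_iter_def)

lemma subst_iter_Suc: "subst_iter \<theta> (Suc n) u = subst_set \<theta> (subst_iter \<theta> n u)"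
  by (simp add: subst_iter_def)

lemma mem_subst_iter_Suc:
  "z \<in> subst_iter \<theta> (Suc n) u \<longleftrightarrow> (\<exists>v\<in>subst_iter \<theta> n u. z \<in> subst_word \<theta> v)"
  by (auto simp: subst_iter_Suc subst_set_def)

lemma subst_pow_eq_subst_iter: "subst_pow \<theta> m a = subst_iter \<theta> m [a]"
  by (simp add: subst_pow_def subst_iter_def)

lemma subst_iter_1: "subst_iter \<theta> 1 [a] = \<theta> a"
  by (auto simp: subst_iter_def subst_set_def subst_word_Cons_iff)

lemma funpow_subst_set: "(subst_set \<theta> ^^ n) U = (\<Union>u\<in>U. subst_iter \<theta> n u)"
  by (induction n) (auto simp: subst_iter_Suc subst_set_def)

lemma subst_iter_add:
  "subst_iter \<theta> (n + k) u = (\<Union>v\<in>subst_iter \<theta> k u. subst_iter \<theta> n v)"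
proof -
  have "subst_iter \<theta> (n + k) u = (subst_set \<theta> ^^ n) (subst_iter \<theta> k u)"
    by (simp add: subst_iter_def funpow_add)
  then show ?thesis by (simp only: funpow_subst_set)
qed

lemma subst_iter_Nil [simp]: "subst_iter \<theta> n [] = {[]}"
  by (induction n) (simp_all add: subst_iter_Suc subst_set_def)

lemma subst_set_append_set:
  "subst_set \<theta> {v @ w | v w. v \<in> A \<and> w \<in> B}
     = {v @ w | v w. v \<in> subst_set \<theta> A \<and> w \<in> subst_set \<theta> B}"
proof (rule set_eqI, rule iffI)
  fix z assume "z \<in> subst_set \<theta> {v @ w | v w. v \<in> A \<and> w \<in> B}"
  then obtain v w where "v \<in> A" "w \<in> B" "z \<in> subst_word \<theta> (v @ w)"
    unfolding subst_set_def by blast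
  then show "z \<in> {v @ w | v w. v \<in> subst_set \<theta> A \<and> w \<in> subst_set \<theta> B}"
    unfolding subst_word_append subst_set_def by blast
next
  fix z assume "z \<in> {v @ w | v w. v \<in> subst_set \<theta> A \<and> w \<in> subst_set \<theta> B}"
  then obtain v w v' w' where "z = v' @ w'" "v \<in> A" "w \<in> B"
      "v' \<in> subst_word \<theta> v" "w' \<in> subst_word \<theta> w"
    unfolding subst_set_def by blast
  then have "z \<in> subst_word \<theta> (v @ w)" "v @ w \<in> {v @ w | v w. v \<in> A \<and> w \<in> B}"
    unfolding subst_word_append by blast+
  then show "z \<in> subst_set \<theta> {v @ w | v w. v \<in> A \<and> w \<in> B}"
    unfolding subst_set_def by blast
qed

lemma subst_iter_append:
  "subst_iter \<theta> n (x @ y) = {v @ w | v w. v \<in> subst_iter \<theta> n x \<and> w \<in> subst_iter \<theta> n y}"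
  by (induction n) (simp_all add: subst_iter_Suc subst_set_append_set)

lemma subst_iter_Cons:
  "subst_iter \<theta> n (c # u) = {v @ w | v w. v \<in> subst_iter \<theta> n [c] \<and> w \<in> subst_iter \<theta> n u}"
  using subst_iter_append[of \<theta> n "[c]" u] by simp

lemma sum_list_map_eq_sum_count:
  fixes f :: "'a::finite \<Rightarrow> 'b::comm_semiring_1"
  shows "sum_list (map f u) = (\<Sum>c\<in>UNIV. of_nat (count_list u c) * f c)"
proof (induction u)
  case Nil
  then show ?case by simp
next
  case (Cons x u)
  have "(\<Sum>c\<in>UNIV. of_nat (count_list (x # u) c) * f c)
      = (\<Sum>c\<in>UNIV. (if x = c then f c else 0) + of_nat (count_list u c) * f c)"
    by (rule sum.cong) (auto simp: algebra_simps)
  also have "\<dots> = f x + (\<Sum>c\<in>UNIV. of_nat (count_list u c) * f c)"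
    by (simp add: sum.distrib)
  finally show ?case using Cons by simp
qed

lemma length_eq_sum_count_list: "length (xs :: 'a::finite list) = (\<Sum>c\<in>UNIV. count_list xs c)"
  using sum_count_set[of xs UNIV] by simp

lemma card_append_set:
  assumes "finite A" "finite B" "\<forall>v\<in>A. length v = k"
  shows "card {v @ w | v w. v \<in> A \<and> w \<in> B} = card A * card B"
proof -
  have eq: "{v @ w | v w. v \<in> A \<and> w \<in> B} = (\<lambda>(v, w). v @ w) ` (A \<times> B)" by auto
  have "inj_on (\<lambda>(v, w). v @ w) (A \<times> B)"
    using assms(3) by (auto simp: inj_on_def append_eq_append_conv)
  then show ?thesis unfolding eq by (simp add: card_image card_cartesian_product)
qed

lemma card_lists_length_eq_CARD: "card {xs :: 'a::finite list. length xs = k} = CARD('a) ^ k"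
  using card_lists_length_eq[of "UNIV :: 'a set" k] by simp

lemma finite_lists_length_eq_UNIV: "finite {xs :: 'a::finite list. length xs = l}"
  using finite_lists_length_eq[of "UNIV :: 'a set" l] by simp

section \<open>Semi-compatible random substitutions\<close>

locale semicompatible_subst =
  fixes \<theta> :: "'a::finite \<Rightarrow> 'a list set"
  assumes random_subst: "random_subst \<theta>" and semi_compatible: "semi_compatible \<theta>"
begin

abbreviation "M \<equiv> subst_matrix \<theta>"

lemma finite_letter_image: "finite (\<theta> a)"
  and letter_image_nonempty: "\<theta> a \<noteq> {}"
  and Nil_notin_letter_image: "[] \<notin> \<theta> a"
  using random_subst by (auto simp: random_subst_def)

lemma finite_subst_word: "finite (subst_word \<theta> u)"
  by (induction u) (simp_all add: subst_word_Cons_image finite_letter_image)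

lemma subst_word_nonempty: "subst_word \<theta> u \<noteq> {}"
  by (induction u) (simp_all add: subst_word_Cons_image letter_image_nonempty)

lemma finite_subst_iter: "finite (subst_iter \<theta> n u)"
  by (induction n) (simp_all add: subst_iter_Suc subst_set_def finite_subst_word)

lemma subst_iter_nonempty: "subst_iter \<theta> n u \<noteq> {}"
  by (induction n) (simp_all add: subst_iter_Suc subst_set_def subst_word_nonempty)

lemma card_subst_iter_pos: "card (subst_iter \<theta> n u) > 0"
  using finite_subst_iter subst_iter_nonempty by (simp add: card_gt_0_iff)

lemma length_le_subst_word: "w \<in> subst_word \<theta> u \<Longrightarrow> length u \<le> length w"
proof (induction u arbitrary: w)
  case (Cons x u)
  then obtain v w' where "w = v @ w'" "v \<in> \<theta> x" "w' \<in> subst_word \<theta> u"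
    unfolding subst_word_Cons_iff by blast
  moreover have "v \<noteq> []" using Nil_notin_letter_image \<open>v \<in> \<theta> x\<close> by blast
  ultimately show ?case using Cons.IH[of w'] by (cases v) auto
qed simp

lemma length_le_subst_iter: "w \<in> subst_iter \<theta> n u \<Longrightarrow> length u \<le> length w"
proof (induction n arbitrary: w)
  case (Suc n)
  then obtain v where "v \<in> subst_iter \<theta> n u" "w \<in> subst_word \<theta> v"
    unfolding mem_subst_iter_Suc by blast
  then show ?case using Suc.IH length_le_subst_word by (meson le_trans)
qed simp

lemma count_list_letter_image: "u \<in> \<theta> a \<Longrightarrow> real (count_list u b) = M b a"
proof -
  assume u: "u \<in> \<theta> a"
  then have "(SOME u. u \<in> \<theta> a) \<in> \<theta> a" by (rule someI)
  then show ?thesis using semi_compatible u unfolding semi_compatible_def subst_matrix_def by metis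
qed

lemma subst_matrix_nonneg: "M i j \<ge> 0"
  by (simp add: subst_matrix_def)

lemma count_list_subst_word:
  "w \<in> subst_word \<theta> u \<Longrightarrow> real (count_list w b) = (\<Sum>c\<in>UNIV. M b c * real (count_list u c))"
proof (induction u arbitrary: w)
  case Nil
  then show ?case by simp
next
  case (Cons x u)
  then obtain v w' where vw: "w = v @ w'" "v \<in> \<theta> x" "w' \<in> subst_word \<theta> u"
    unfolding subst_word_Cons_iff by blast
  have "(\<Sum>c\<in>UNIV. M b c * real (count_list (x # u) c))
      = (\<Sum>c\<in>UNIV. (if x = c then M b c else 0) + M b c * real (count_list u c))"
    by (rule sum.cong) (auto simp: algebra_simps)
  also have "\<dots> = M b x + (\<Sum>c\<in>UNIV. M b c * real (count_list u c))"
    by (simp add: sum.distrib)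
  finally show ?case using Cons.IH[OF vw(3)] count_list_letter_image[OF vw(2), of b] vw(1) by simp
qed

lemma count_list_subst_iter:
  "w \<in> subst_iter \<theta> n [a] \<Longrightarrow> real (count_list w b) = mat_pow M n b a"
proof (induction n arbitrary: w b)
  case (Suc n)
  then obtain v where v: "v \<in> subst_iter \<theta> n [a]" "w \<in> subst_word \<theta> v"
    unfolding mem_subst_iter_Suc by blast
  show ?case
    using count_list_subst_word[OF v(2)] Suc.IH[OF v(1)] by (simp add: mat_mult_def)
qed simp

lemma length_subst_iter_letter:
  "w \<in> subst_iter \<theta> n [a] \<Longrightarrow> real (length w) = (\<Sum>b\<in>UNIV. mat_pow M n b a)"
  unfolding length_eq_sum_count_list by (simp add: count_list_subst_iter)

lemma ell_eq_column_sum: "real (ell \<theta> n a) = (\<Sum>b\<in>UNIV. mat_pow M n b a)"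
proof -
  obtain w where "w \<in> subst_iter \<theta> n [a]" using subst_iter_nonempty by blast
  then have "(SOME w. w \<in> subst_iter \<theta> n [a]) \<in> subst_iter \<theta> n [a]" by (rule someI)
  then show ?thesis unfolding ell_def subst_pow_eq_subst_iter by (rule length_subst_iter_letter)
qed

lemma length_subst_iter_letter_eq_ell: "w \<in> subst_iter \<theta> n [a] \<Longrightarrow> length w = ell \<theta> n a"
  using length_subst_iter_letter ell_eq_column_sum by (metis of_nat_eq_iff)

lemma length_subst_iter: "w \<in> subst_iter \<theta> n u \<Longrightarrow> length w = (\<Sum>c\<leftarrow>u. ell \<theta> n c)"
proof (induction u arbitrary: w)
  case (Cons c u)
  then obtain v w' where "w = v @ w'" "v \<in> subst_iter \<theta> n [c]" "w' \<in> subst_iter \<theta> n u"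
    unfolding subst_iter_Cons[of \<theta> n c u] by blast
  then show ?case using Cons.IH[of w'] length_subst_iter_letter_eq_ell[of v n c] by simp
qed simp

lemma card_subst_iter_Cons:
  "card (subst_iter \<theta> n (c # u)) = card (subst_iter \<theta> n [c]) * card (subst_iter \<theta> n u)"
  unfolding subst_iter_Cons[of \<theta> n c u]
  by (rule card_append_set[where k = "ell \<theta> n c"])
    (simp_all add: finite_subst_iter length_subst_iter_letter_eq_ell)

lemma ln_card_subst_iter:
  "ln (real (card (subst_iter \<theta> n u))) = (\<Sum>c\<leftarrow>u. qv \<theta> n c)"
proof (induction u)
  case (Cons c u)
  have "ln (real (card (subst_iter \<theta> n (c # u))))
      = ln (real (card (subst_iter \<theta> n [c]))) + ln (real (card (subst_iter \<theta> n u)))"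
    using card_subst_iter_pos[of n "[c]"] card_subst_iter_pos[of n u]
    unfolding card_subst_iter_Cons[of n c u] by (simp add: ln_mult)
  then show ?case using Cons by (simp add: qv_def subst_pow_eq_subst_iter)
qed simp

lemma qv_eq: "qv \<theta> n a = ln (real (card (subst_iter \<theta> n [a])))"
  by (simp add: qv_def subst_pow_eq_subst_iter)

lemma qv_nonneg: "qv \<theta> n a \<ge> 0"
  using card_subst_iter_pos[of n "[a]"] by (simp add: qv_eq)

lemma qv_0: "qv \<theta> 0 a = 0"
  by (simp add: qv_eq)

lemma sum_list_subst_iter_letter:
  fixes f :: "'a \<Rightarrow> real"
  assumes "u \<in> subst_iter \<theta> k [a]"
  shows "(\<Sum>c\<leftarrow>u. f c) = (\<Sum>c\<in>UNIV. mat_pow M k c a * f c)"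
proof -
  have "(\<Sum>c\<leftarrow>u. f c) = (\<Sum>c\<in>UNIV. real (count_list u c) * f c)"
    by (rule sum_list_map_eq_sum_count)
  then show ?thesis using count_list_subst_iter[OF assms] by simp
qed

lemma ell_add: "real (ell \<theta> (n + k) a) = (\<Sum>c\<in>UNIV. mat_pow M k c a * real (ell \<theta> n c))"
proof -
  obtain w where w: "w \<in> subst_iter \<theta> (n + k) [a]" using subst_iter_nonempty by blast
  then obtain u where u: "u \<in> subst_iter \<theta> k [a]" "w \<in> subst_iter \<theta> n u"
    unfolding subst_iter_add by blast
  have "real (\<Sum>c\<leftarrow>u. ell \<theta> n c) = (\<Sum>c\<leftarrow>u. real (ell \<theta> n c))"
    by (induction u) simp_all
  then have "real (ell \<theta> (n + k) a) = (\<Sum>c\<leftarrow>u. real (ell \<theta> n c))"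
    using length_subst_iter_letter_eq_ell[OF w] length_subst_iter[OF u(2)] by simp
  then show ?thesis by (simp add: sum_list_subst_iter_letter[OF u(1)])
qed

text \<open>\<open>\<vartheta>\<^sup>n\<^sup>+\<^sup>k(a)\<close> is the union of the sets \<open>\<vartheta>\<^sup>n(u)\<close>, \<open>u \<in> \<vartheta>\<^sup>k(a)\<close>, all of the same
  cardinality \<open>exp (\<Sum>\<^sub>c (M\<^sup>k)\<^sub>c\<^sub>a q\<^sub>n\<^sub>,\<^sub>c)\<close>; one of them gives the lower bound, their number the upper
  one.\<close>

lemma qv_add_lower: "(\<Sum>c\<in>UNIV. mat_pow M k c a * qv \<theta> n c) \<le> qv \<theta> (n + k) a"
proof -
  obtain u where u: "u \<in> subst_iter \<theta> k [a]" using subst_iter_nonempty by blast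
  have "subst_iter \<theta> n u \<subseteq> subst_iter \<theta> (n + k) [a]" unfolding subst_iter_add using u by blast
  then have "card (subst_iter \<theta> n u) \<le> card (subst_iter \<theta> (n + k) [a])"
    by (rule card_mono[OF finite_subst_iter])
  then have "ln (real (card (subst_iter \<theta> n u))) \<le> qv \<theta> (n + k) a"
    using card_subst_iter_pos[of n u] by (simp add: qv_eq)
  then show ?thesis unfolding ln_card_subst_iter sum_list_subst_iter_letter[OF u] .
qed

lemma qv_add_upper: "qv \<theta> (n + k) a \<le> qv \<theta> k a + (\<Sum>c\<in>UNIV. mat_pow M k c a * qv \<theta> n c)"
proof -
  define X where "X = (\<Sum>c\<in>UNIV. mat_pow M k c a * qv \<theta> n c)"
  have card_eq: "real (card (subst_iter \<theta> n u)) = exp X" if "u \<in> subst_iter \<theta> k [a]" for u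
    using card_subst_iter_pos[of n u] ln_card_subst_iter[of n u]
    unfolding X_def sum_list_subst_iter_letter[OF that] by (metis exp_ln of_nat_0_less_iff)
  have "card (subst_iter \<theta> (n + k) [a]) \<le> (\<Sum>u\<in>subst_iter \<theta> k [a]. card (subst_iter \<theta> n u))"
    unfolding subst_iter_add by (rule card_UN_le[OF finite_subst_iter])
  then have "real (card (subst_iter \<theta> (n + k) [a]))
      \<le> (\<Sum>u\<in>subst_iter \<theta> k [a]. real (card (subst_iter \<theta> n u)))"
    by (metis of_nat_le_iff of_nat_sum)
  also have "\<dots> = real (card (subst_iter \<theta> k [a])) * exp X"
    using card_eq by simp
  finally have "qv \<theta> (n + k) a \<le> ln (real (card (subst_iter \<theta> k [a])) * exp X)"
    using card_subst_iter_pos[of "n + k" "[a]"] by (simp add: qv_eq)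
  also have "\<dots> = qv \<theta> k a + X"
    using card_subst_iter_pos[of k "[a]"] by (simp add: ln_mult qv_eq)
  finally show ?thesis unfolding X_def .
qed

lemma ell_ge_1: "ell \<theta> n a \<ge> 1"
proof -
  obtain w where w: "w \<in> subst_iter \<theta> n [a]" using subst_iter_nonempty by blast
  from length_le_subst_iter[OF w] have "1 \<le> length w" by simp
  then show ?thesis using length_subst_iter_letter_eq_ell[OF w] by simp
qed

lemma ell_mono: "n \<le> m \<Longrightarrow> ell \<theta> n a \<le> ell \<theta> m a"
proof -
  assume "n \<le> m"
  then obtain k where m: "m = k + n" by (metis add.commute le_add_diff_inverse)
  obtain w where w: "w \<in> subst_iter \<theta> m [a]" using subst_iter_nonempty by blast
  then obtain v where v: "v \<in> subst_iter \<theta> n [a]" "w \<in> subst_iter \<theta> k v"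
    unfolding m subst_iter_add by blast
  show ?thesis
    using length_subst_iter_letter_eq_ell[OF w] length_subst_iter_letter_eq_ell[OF v(1)]
      length_le_subst_iter[OF v(2)] by simp
qed

lemma qv_le_ell: "qv \<theta> n a \<le> real (ell \<theta> n a) * ln (real CARD('a))"
proof -
  have "subst_iter \<theta> n [a] \<subseteq> {xs. length xs = ell \<theta> n a}"
    using length_subst_iter_letter_eq_ell by blast
  from card_mono[OF finite_lists_length_eq_UNIV this]
  have "card (subst_iter \<theta> n [a]) \<le> CARD('a) ^ ell \<theta> n a"
    by (simp add: card_lists_length_eq_CARD)
  then have "real (card (subst_iter \<theta> n [a])) \<le> real CARD('a) ^ ell \<theta> n a"
    by (metis of_nat_le_iff of_nat_power)
  then have "qv \<theta> n a \<le> ln (real CARD('a) ^ ell \<theta> n a)"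
    using card_subst_iter_pos[of n "[a]"] by (simp add: qv_eq)
  then show ?thesis by (simp add: ln_realpow)
qed

end

section \<open>Matrix powers and averaging\<close>

lemma mat_mult_assoc: "mat_mult (mat_mult A B) C = mat_mult A (mat_mult B C)"
proof (intro ext)
  fix i j
  have "mat_mult (mat_mult A B) C i j = (\<Sum>k\<in>UNIV. \<Sum>l\<in>UNIV. A i l * B l k * C k j)"
    by (simp add: mat_mult_def sum_distrib_right)
  also have "\<dots> = (\<Sum>l\<in>UNIV. \<Sum>k\<in>UNIV. A i l * B l k * C k j)"
    by (rule sum.swap)
  also have "\<dots> = mat_mult A (mat_mult B C) i j"
    by (simp add: mat_mult_def sum_distrib_left mult.assoc)
  finally show "mat_mult (mat_mult A B) C i j = mat_mult A (mat_mult B C) i j" .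
qed

lemma sum_indicator_mult: "(\<Sum>k\<in>(UNIV::'a::finite set). (if i = k then 1 else 0) * f k) = (f i :: real)"
proof -
  have "(\<Sum>k\<in>(UNIV::'a set). (if i = k then 1 else 0) * f k) = (\<Sum>k\<in>UNIV. if i = k then f k else 0)"
    by (rule sum.cong) auto
  then show ?thesis by simp
qed

lemma mat_mult_id_left: "mat_mult (\<lambda>i j. if i = j then 1 else 0) B = B"
  by (intro ext) (simp add: mat_mult_def sum_indicator_mult)

lemma mat_pow_add: "mat_pow A (m + k) = mat_mult (mat_pow A m) (mat_pow A k)"
  by (induction m) (simp_all add: mat_mult_id_left mat_mult_assoc)

lemma mat_pow_nonneg: "(\<And>i j. A i j \<ge> 0) \<Longrightarrow> mat_pow A k i j \<ge> 0"
  by (induction k arbitrary: i j) (simp_all add: mat_mult_def sum_nonneg)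

lemma mat_pow_eigenvector:
  assumes "\<And>i. (\<Sum>j\<in>UNIV. A i j * R j) = l * R i"
  shows "(\<Sum>j\<in>UNIV. mat_pow A k i j * R j) = l ^ k * R i"
proof (induction k arbitrary: i)
  case 0
  then show ?case by (simp add: sum_indicator_mult)
next
  case (Suc k)
  have "(\<Sum>j\<in>UNIV. mat_pow A (Suc k) i j * R j)
      = (\<Sum>j\<in>UNIV. \<Sum>m\<in>UNIV. A i m * mat_pow A k m j * R j)"
    by (simp add: mat_mult_def sum_distrib_right)
  also have "\<dots> = (\<Sum>m\<in>UNIV. \<Sum>j\<in>UNIV. A i m * mat_pow A k m j * R j)"
    by (rule sum.swap)
  also have "\<dots> = (\<Sum>m\<in>UNIV. A i m * (l ^ k * R m))"
    by (simp add: Suc.IH[symmetric] sum_distrib_left mult.assoc)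
  also have "\<dots> = l ^ k * (\<Sum>m\<in>UNIV. A i m * R m)"
    by (simp add: sum_distrib_left algebra_simps)
  also have "\<dots> = l ^ k * (l * R i)"
    using assms[of i] by simp
  finally show ?case by simp
qed

lemma weighted_avg_bounds:
  fixes V z :: "'a::finite \<Rightarrow> real"
  assumes "\<And>l. V l \<ge> \<delta>" and "\<delta> \<ge> 0" and "(\<Sum>l\<in>UNIV. V l) = 1"
  shows "(\<Sum>l\<in>UNIV. V l * z l) \<le> Max (range z) - \<delta> * (Max (range z) - Min (range z))"
    and "(\<Sum>l\<in>UNIV. V l * z l) \<ge> Min (range z) + \<delta> * (Max (range z) - Min (range z))"
proof -
  let ?Mx = "Max (range z)" and ?Mn = "Min (range z)"
  have "?Mn \<in> range z" "?Mx \<in> range z" by (simp_all add: Min_in Max_in)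
  then obtain l0 l1 where l0: "z l0 = ?Mn" and l1: "z l1 = ?Mx" by (metis rangeE)
  have le: "z l \<le> ?Mx" "?Mn \<le> z l" for l by simp_all
  have V_nonneg: "V l \<ge> 0" for l using assms(1,2) order_trans by blast
  have "V l0 * (?Mx - z l0) \<le> (\<Sum>l\<in>UNIV. V l * (?Mx - z l))"
    by (rule member_le_sum) (auto intro!: mult_nonneg_nonneg V_nonneg simp: le)
  also have "\<dots> = ?Mx - (\<Sum>l\<in>UNIV. V l * z l)"
    by (simp add: algebra_simps sum_subtractf sum_distrib_right[symmetric] assms(3))
  finally have "(\<Sum>l\<in>UNIV. V l * z l) \<le> ?Mx - V l0 * (?Mx - ?Mn)" using l0 by simp
  moreover have "\<delta> * (?Mx - ?Mn) \<le> V l0 * (?Mx - ?Mn)"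
    by (rule mult_right_mono[OF assms(1)]) (simp add: l0[symmetric] le)
  ultimately show "(\<Sum>l\<in>UNIV. V l * z l) \<le> ?Mx - \<delta> * (?Mx - ?Mn)" by linarith
  have "V l1 * (z l1 - ?Mn) \<le> (\<Sum>l\<in>UNIV. V l * (z l - ?Mn))"
    by (rule member_le_sum) (auto intro!: mult_nonneg_nonneg V_nonneg simp: le)
  also have "\<dots> = (\<Sum>l\<in>UNIV. V l * z l) - ?Mn"
    by (simp add: algebra_simps sum_subtractf sum_distrib_right[symmetric] assms(3))
  finally have "(\<Sum>l\<in>UNIV. V l * z l) \<ge> ?Mn + V l1 * (?Mx - ?Mn)" using l1 by simp
  moreover have "\<delta> * (?Mx - ?Mn) \<le> V l1 * (?Mx - ?Mn)"
    by (rule mult_right_mono[OF assms(1)]) (simp add: l1[symmetric] le)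
  ultimately show "(\<Sum>l\<in>UNIV. V l * z l) \<ge> ?Mn + \<delta> * (?Mx - ?Mn)" by linarith
qed

lemma decseq_tendsto_0_if_contracting:
  fixes d :: "nat \<Rightarrow> real"
  assumes dec: "decseq d" and nonneg: "\<And>k. d k \<ge> 0"
    and contr: "\<And>k. d (p + k) \<le> c * d k" and "0 \<le> c" "c < 1" and "p > 0"
  shows "d \<longlonglongrightarrow> 0"
proof -
  have d_mult: "d (j * p) \<le> c ^ j * d 0" for j
  proof (induction j)
    case (Suc j)
    have "d (Suc j * p) \<le> c * d (j * p)"
      using contr[of "j * p"] by (simp add: add.commute)
    also have "\<dots> \<le> c * (c ^ j * d 0)"
      by (rule mult_left_mono[OF Suc.IH \<open>0 \<le> c\<close>])
    finally show ?case by simp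
  qed simp
  have d_le: "d k \<le> c ^ (k div p) * d 0" for k
    using dec d_mult[of "k div p"] by (simp add: decseq_def) (meson div_times_less_eq_dividend order_trans)
  have "filterlim (\<lambda>k. k div p) at_top sequentially"
    unfolding filterlim_at_top eventually_sequentially
    using \<open>p > 0\<close> by (auto simp: less_eq_div_iff_mult_less_eq intro: exI[of _ "_ * p"])
  moreover have "(\<lambda>j. c ^ j * d 0) \<longlonglongrightarrow> 0 * d 0"
    by (intro tendsto_mult tendsto_const LIMSEQ_realpow_zero) (use assms in auto)
  ultimately have "(\<lambda>k. c ^ (k div p) * d 0) \<longlonglongrightarrow> 0"
    using filterlim_compose by fastforce
  then show ?thesis
    by (rule tendsto_sandwich[rotated 2, OF tendsto_const]) (simp_all add: nonneg d_le)
qed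

lemma realpow_at_top: "(x::real) > 1 \<Longrightarrow> filterlim (\<lambda>n. x ^ n) at_top sequentially"
  unfolding filterlim_at_top eventually_sequentially
proof
  fix Z :: real assume "x > 1"
  obtain N where "Z < x ^ N" using real_arch_pow[OF \<open>x > 1\<close>] by blast
  then show "\<exists>N. \<forall>n\<ge>N. Z \<le> x ^ n"
    using \<open>x > 1\<close> by (intro exI[of _ N]) (auto intro: order_trans[OF less_imp_le power_increasing])
qed

lemma tendsto_between_monotone_bounds:
  fixes lo hi :: "nat \<Rightarrow> real"
  assumes "incseq lo" and "decseq hi" and "\<And>k. lo k \<le> hi k" and "(\<lambda>k. hi k - lo k) \<longlonglongrightarrow> 0"
  obtains \<gamma> where "lo \<longlonglongrightarrow> \<gamma>" and "hi \<longlonglongrightarrow> \<gamma>" and "\<And>k. lo k \<le> \<gamma>"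
proof
  have "lo k \<le> hi 0" for k
    using assms(2) assms(3)[of k] by (simp add: decseq_def) (meson order_trans zero_le)
  then have bdd: "bdd_above (range lo)" by (intro bdd_aboveI[of _ "hi 0"]) auto
  show lo_lim: "lo \<longlonglongrightarrow> (SUP k. lo k)" by (rule LIMSEQ_incseq_SUP[OF bdd assms(1)])
  have "(\<lambda>k. lo k + (hi k - lo k)) \<longlonglongrightarrow> (SUP k. lo k) + 0"
    by (intro tendsto_add lo_lim assms(4))
  then show "hi \<longlonglongrightarrow> (SUP k. lo k)" by simp
  show "lo k \<le> (SUP k. lo k)" for k by (rule cSUP_upper[OF _ bdd]) simp
qed

text \<open>Iterating a stochastic matrix \<open>U\<close> some power \<open>V = U\<^sup>p\<close> of which has all entries \<open>\<ge> \<delta> > 0\<close>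
  shrinks the oscillation \<open>max - min\<close> by the factor \<open>1 - \<delta>\<close> every \<open>p\<close> steps, while the minimum
  increases and the maximum decreases.\<close>

lemma averaging_iteration_converges:
  fixes z :: "nat \<Rightarrow> 'a::finite \<Rightarrow> real"
  assumes step: "\<And>k j. z (Suc k) j = (\<Sum>l\<in>UNIV. U j l * z k l)"
    and U_nonneg: "\<And>j l. U j l \<ge> 0" and U_sum: "\<And>j. (\<Sum>l\<in>UNIV. U j l) = 1"
    and p_step: "\<And>k j. z (p + k) j = (\<Sum>l\<in>UNIV. V j l * z k l)"
    and V_ge: "\<And>j l. V j l \<ge> \<delta>" and "\<delta> > 0" and V_sum: "\<And>j. (\<Sum>l\<in>UNIV. V j l) = 1"
    and "p > 0"
  obtains \<gamma> where "\<And>j. (\<lambda>k. z k j) \<longlonglongrightarrow> \<gamma>" and "\<And>k. Min (range (z k)) \<le> \<gamma>"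
proof -
  define mx where "mx k = Max (range (z k))" for k
  define mn where "mn k = Min (range (z k))" for k
  have bounds: "mn k \<le> z k j" "z k j \<le> mx k" for k j by (simp_all add: mx_def mn_def)
  have mn_le_mx: "mn k \<le> mx k" for k using bounds[of k undefined] by linarith
  have "mx (Suc k) \<le> mx k" "mn k \<le> mn (Suc k)" for k
    using weighted_avg_bounds[where V="U _" and \<delta>=0 and z="z k"] U_nonneg U_sum
    by (simp_all add: mx_def mn_def step Max_le_iff Min_ge_iff)
  then have dec: "decseq mx" and inc: "incseq mn"
    by (simp_all add: decseq_SucI incseq_SucI)
  have mx_p: "mx (p + k) \<le> mx k - \<delta> * (mx k - mn k)"
    and mn_p: "mn k + \<delta> * (mx k - mn k) \<le> mn (p + k)" for k
    using weighted_avg_bounds[where V="V _" and \<delta>=\<delta> and z="z k"] V_ge V_sum \<open>\<delta> > 0\<close>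
    by (simp_all add: mx_def mn_def p_step Max_le_iff Min_ge_iff)
  have contr: "mx (p + k) - mn (p + k) \<le> (1 - \<delta>) * (mx k - mn k)" for k
  proof -
    have "\<delta> * (mx k - mn k) \<ge> 0" using mn_le_mx[of k] \<open>\<delta> > 0\<close> by simp
    then show ?thesis using mx_p[of k] mn_p[of k] by (simp add: algebra_simps)
  qed
  have "\<delta> \<le> 1"
  proof -
    have "V j l \<le> (\<Sum>l\<in>UNIV. V j l)" for j l
      by (rule member_le_sum) (use V_ge \<open>\<delta> > 0\<close> in \<open>auto intro: order.trans[OF less_imp_le]\<close>)
    from this[of undefined undefined] show ?thesis
      using V_ge[of undefined undefined] V_sum[of undefined] by linarith
  qed
  have "decseq (\<lambda>k. mx k - mn k)"
    using dec inc by (simp add: decseq_def incseq_def diff_mono)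
  then have "(\<lambda>k. mx k - mn k) \<longlonglongrightarrow> 0"
    by (rule decseq_tendsto_0_if_contracting[of "\<lambda>k. mx k - mn k" p "1 - \<delta>", OF _ _ contr])
      (use mn_le_mx \<open>\<delta> > 0\<close> \<open>\<delta> \<le> 1\<close> \<open>p > 0\<close> in simp_all)
  then obtain \<gamma> where "mn \<longlonglongrightarrow> \<gamma>" "mx \<longlonglongrightarrow> \<gamma>" "\<And>k. mn k \<le> \<gamma>"
    using tendsto_between_monotone_bounds[OF inc dec mn_le_mx] by blast
  then show thesis
    by (intro that[of \<gamma>] tendsto_sandwich[OF _ _ \<open>mn \<longlonglongrightarrow> \<gamma>\<close> \<open>mx \<longlonglongrightarrow> \<gamma>\<close>])
      (simp_all add: bounds flip: mn_def)
qed

section \<open>Perron--Frobenius asymptotics\<close>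

locale primitive_semicompatible_subst = semicompatible_subst \<theta> for \<theta> :: "'a::finite \<Rightarrow> 'a list set" +
  fixes R :: "'a \<Rightarrow> real"
  assumes primitive: "primitive_subst \<theta>" and pf_vector: "is_right_pf_vector (subst_matrix \<theta>) R"
begin

abbreviation "lam \<equiv> pf_eigenvalue (subst_matrix \<theta>)"

lemma R_nonneg: "R i \<ge> 0" and R_sum: "(\<Sum>i\<in>UNIV. R i) = 1"
  and R_eigen: "(\<Sum>j\<in>UNIV. M i j * R j) = lam * R i"
  using pf_vector by (auto simp: is_right_pf_vector_def)

lemma R_eigen_pow: "(\<Sum>j\<in>UNIV. mat_pow M k i j * R j) = lam ^ k * R i"
  by (rule mat_pow_eigenvector[OF R_eigen])

lemma mat_pow_M_nonneg: "mat_pow M k i j \<ge> 0"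
  by (rule mat_pow_nonneg[OF subst_matrix_nonneg])

lemma sum_mat_pow_R:
  "(\<Sum>i\<in>UNIV. R i * (\<Sum>c\<in>UNIV. mat_pow M k c i * f c)) = lam ^ k * (\<Sum>c\<in>UNIV. f c * R c)"
proof -
  have "(\<Sum>i\<in>UNIV. R i * (\<Sum>c\<in>UNIV. mat_pow M k c i * f c))
      = (\<Sum>i\<in>UNIV. \<Sum>c\<in>UNIV. f c * (mat_pow M k c i * R i))"
    by (simp add: sum_distrib_left algebra_simps)
  also have "\<dots> = (\<Sum>c\<in>UNIV. \<Sum>i\<in>UNIV. f c * (mat_pow M k c i * R i))"
    by (rule sum.swap)
  also have "\<dots> = (\<Sum>c\<in>UNIV. f c * (lam ^ k * R c))"
    by (simp add: sum_distrib_left[symmetric] R_eigen_pow)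
  also have "\<dots> = lam ^ k * (\<Sum>c\<in>UNIV. f c * R c)"
    by (simp add: sum_distrib_left algebra_simps)
  finally show ?thesis .
qed

lemma sum_ell_R: "(\<Sum>c\<in>UNIV. real (ell \<theta> n c) * R c) = lam ^ n"
  using sum_mat_pow_R[of n "\<lambda>_. 1"] R_sum
  by (simp add: ell_eq_column_sum sum_distrib_right mult.commute)

lemma lam_ge_1: "lam \<ge> 1"
proof -
  have "(\<Sum>c\<in>UNIV. R c) \<le> (\<Sum>c\<in>UNIV. real (ell \<theta> 1 c) * R c)"
  proof (rule sum_mono)
    show "R c \<le> real (ell \<theta> 1 c) * R c" for c
      using mult_right_mono[of 1 "real (ell \<theta> 1 c)" "R c"] ell_ge_1 R_nonneg by simp
  qed
  then show ?thesis using sum_ell_R[of 1] R_sum by simp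
qed

lemma lam_pos: "lam > 0"
  using lam_ge_1 by simp

lemma R_pos: "R i > 0"
proof -
  obtain p where p: "\<And>i j. mat_pow M p i j > 0"
    using primitive unfolding primitive_subst_def primitive_mat_def by blast
  obtain j0 where j0: "R j0 > 0"
    using R_sum R_nonneg by (metis less_eq_real_def sum.neutral zero_neq_one)
  have "mat_pow M p i j0 * R j0 \<le> (\<Sum>j\<in>UNIV. mat_pow M p i j * R j)"
    by (rule member_le_sum) (auto intro: mult_nonneg_nonneg mat_pow_M_nonneg R_nonneg)
  moreover have "mat_pow M p i j0 * R j0 > 0" using p j0 by simp
  ultimately have "lam ^ p * R i > 0" using R_eigen_pow[of p i] by simp
  then show ?thesis using R_nonneg[of i] lam_pos by (simp add: zero_less_mult_iff)
qed

lemma R_neq_0: "R i \<noteq> 0"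
  using R_pos[of i] by simp

text \<open>Perron--Frobenius convergence: \<open>(M\<^sup>k)\<^sub>j\<^sub>i / (\<lambda>\<^sup>k R\<^sub>j)\<close> satisfies \<open>z\<^sub>k\<^sub>+\<^sub>1 = U z\<^sub>k\<close> for the
  stochastic matrix \<open>U\<^sub>j\<^sub>l = M\<^sub>j\<^sub>l R\<^sub>l / (\<lambda> R\<^sub>j)\<close>, a power of which is positive by primitivity.\<close>

lemma normalized_column_tendsto:
  obtains \<gamma> where "\<gamma> > 0" and "\<And>j. (\<lambda>k. mat_pow M k j i / (lam ^ k * R j)) \<longlonglongrightarrow> \<gamma>"
proof -
  obtain p where p: "p > 0" "\<And>i j. mat_pow M p i j > 0"
    using primitive unfolding primitive_subst_def primitive_mat_def by blast
  define z where "z k j = mat_pow M k j i / (lam ^ k * R j)" for k j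
  define U where "U j l = M j l * R l / (lam * R j)" for j l
  define V where "V j l = mat_pow M p j l * R l / (lam ^ p * R j)" for j l
  define \<delta> where "\<delta> = Min (range (\<lambda>(j, l). V j l))"
  have V_pos: "V j l > 0" for j l
    unfolding V_def using p(2)[of j l] R_pos[of l] R_pos[of j] lam_pos by simp
  have "\<delta> \<in> range (\<lambda>(j, l). V j l)" unfolding \<delta>_def by (rule Min_in) auto
  then have "\<delta> > 0" using V_pos by auto
  have V_ge: "V j l \<ge> \<delta>" for j l unfolding \<delta>_def by (rule Min_le) auto
  have U_nonneg: "U j l \<ge> 0" for j l
    unfolding U_def using subst_matrix_nonneg[of j l] R_pos[of l] R_pos[of j] lam_pos by simp
  have U_sum: "(\<Sum>l\<in>UNIV. U j l) = 1" for j
    using R_eigen[of j] R_pos[of j] lam_pos by (simp add: U_def flip: sum_divide_distrib)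
  have V_sum: "(\<Sum>l\<in>UNIV. V j l) = 1" for j
    using R_eigen_pow[of p j] R_pos[of j] lam_pos by (simp add: V_def flip: sum_divide_distrib)
  have U_step: "z (Suc k) j = (\<Sum>l\<in>UNIV. U j l * z k l)" for k j
  proof -
    have "(\<Sum>l\<in>UNIV. U j l * z k l) = (\<Sum>l\<in>UNIV. M j l * mat_pow M k l i / (lam ^ Suc k * R j))"
      by (rule sum.cong) (use R_neq_0 lam_pos in \<open>auto simp: U_def z_def field_simps\<close>)
    then show ?thesis by (simp add: z_def mat_mult_def sum_divide_distrib)
  qed
  have V_step: "z (p + k) j = (\<Sum>l\<in>UNIV. V j l * z k l)" for k j
  proof -
    have "(\<Sum>l\<in>UNIV. V j l * z k l)
        = (\<Sum>l\<in>UNIV. mat_pow M p j l * mat_pow M k l i / (lam ^ (p + k) * R j))"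
      by (rule sum.cong) (use R_neq_0 lam_pos in \<open>auto simp: V_def z_def field_simps power_add\<close>)
    then show ?thesis by (simp add: z_def mat_pow_add mat_mult_def sum_divide_distrib)
  qed
  obtain \<gamma> where lim: "\<And>j. (\<lambda>k. z k j) \<longlonglongrightarrow> \<gamma>" and ge: "\<And>k. Min (range (z k)) \<le> \<gamma>"
    using averaging_iteration_converges[of z U p V \<delta>, OF U_step U_nonneg U_sum V_step V_ge
        \<open>\<delta> > 0\<close> V_sum \<open>p > 0\<close>] by blast
  have "Min (range (z p)) \<in> range (z p)" by (rule Min_in) auto
  moreover have "z p j > 0" for j
    unfolding z_def using p(2)[of j i] R_pos[of j] lam_pos by simp
  ultimately have "Min (range (z p)) > 0" by auto
  then have "\<gamma> > 0" using ge[of p] by linarith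
  then show thesis using lim unfolding z_def by (rule that)
qed

lemma sum_mat_pow_ratio_tendsto:
  assumes "(\<Sum>j\<in>UNIV. y j * R j) \<noteq> 0"
  shows "(\<lambda>k. (\<Sum>j\<in>UNIV. x j * mat_pow M k j i) / (\<Sum>j\<in>UNIV. y j * mat_pow M k j i))
           \<longlonglongrightarrow> (\<Sum>j\<in>UNIV. x j * R j) / (\<Sum>j\<in>UNIV. y j * R j)"
proof -
  obtain \<gamma> where "\<gamma> > 0" and \<gamma>: "\<And>j. (\<lambda>k. mat_pow M k j i / (lam ^ k * R j)) \<longlonglongrightarrow> \<gamma>"
    using normalized_column_tendsto by blast
  define z where "z k j = mat_pow M k j i / (lam ^ k * R j)" for k j
  have scale: "(\<Sum>j\<in>UNIV. f j * mat_pow M k j i) = lam ^ k * (\<Sum>j\<in>UNIV. f j * R j * z k j)"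
    for f k
  proof -
    have "f j * mat_pow M k j i = lam ^ k * (f j * R j * z k j)" for j
      using R_pos[of j] lam_pos by (simp add: z_def field_simps)
    then show ?thesis by (simp only: sum_distrib_left)
  qed
  have sum_tendsto: "(\<lambda>k. \<Sum>j\<in>UNIV. f j * R j * z k j) \<longlonglongrightarrow> \<gamma> * (\<Sum>j\<in>UNIV. f j * R j)" for f
  proof -
    have "(\<lambda>k. \<Sum>j\<in>UNIV. f j * R j * z k j) \<longlonglongrightarrow> (\<Sum>j\<in>UNIV. f j * R j * \<gamma>)"
      by (intro tendsto_sum tendsto_mult tendsto_const) (use \<gamma> in \<open>simp add: z_def\<close>)
    then show ?thesis by (simp add: sum_distrib_left algebra_simps)
  qed
  have "(\<lambda>k. (\<Sum>j\<in>UNIV. x j * R j * z k j) / (\<Sum>j\<in>UNIV. y j * R j * z k j))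
          \<longlonglongrightarrow> (\<gamma> * (\<Sum>j\<in>UNIV. x j * R j)) / (\<gamma> * (\<Sum>j\<in>UNIV. y j * R j))"
    using tendsto_divide[OF sum_tendsto sum_tendsto] \<open>\<gamma> > 0\<close> assms by simp
  then show ?thesis unfolding scale using \<open>\<gamma> > 0\<close> lam_pos by simp
qed

lemma ell_at_top:
  assumes "lam > 1"
  shows "filterlim (\<lambda>k. real (ell \<theta> k i)) at_top sequentially"
proof -
  obtain \<gamma> where "\<gamma> > 0" and \<gamma>: "\<And>j. (\<lambda>k. mat_pow M k j i / (lam ^ k * R j)) \<longlonglongrightarrow> \<gamma>"
    using normalized_column_tendsto by blast
  have eq: "real (ell \<theta> k i) / lam ^ k = (\<Sum>j\<in>UNIV. R j * (mat_pow M k j i / (lam ^ k * R j)))" for k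
    unfolding ell_eq_column_sum using R_neq_0 lam_pos by (simp add: sum_divide_distrib)
  have "(\<lambda>k. \<Sum>j\<in>UNIV. R j * (mat_pow M k j i / (lam ^ k * R j))) \<longlonglongrightarrow> (\<Sum>j\<in>UNIV. R j * \<gamma>)"
    by (intro tendsto_sum tendsto_mult tendsto_const \<gamma>)
  then have "(\<lambda>k. real (ell \<theta> k i) / lam ^ k) \<longlonglongrightarrow> \<gamma>"
    unfolding eq by (simp add: sum_distrib_right[symmetric] R_sum)
  moreover have "filterlim (\<lambda>k. lam ^ k) at_top sequentially"
    using assms by (rule realpow_at_top)
  ultimately have "filterlim (\<lambda>k. real (ell \<theta> k i) / lam ^ k * lam ^ k) at_top sequentially"
    using filterlim_tendsto_pos_mult_at_top \<open>\<gamma> > 0\<close> by blast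
  then show ?thesis using lam_pos by simp
qed

section \<open>Inflation word entropy\<close>

text \<open>\<open>weighted_q m\<close> is the paper's \<open>q\<^sub>m\<^sup>T R\<close>, and \<open>s_infl\<close> will turn out to be \<open>s\<^sup>I = s\<close>.\<close>

definition weighted_q :: "nat \<Rightarrow> real" where
  "weighted_q n = (\<Sum>j\<in>UNIV. qv \<theta> n j * R j)"

definition weighted_q_norm :: "nat \<Rightarrow> real" where
  "weighted_q_norm n = weighted_q n / lam ^ n"

definition s_infl :: real where
  "s_infl = (SUP n. weighted_q_norm n)"

lemma weighted_q_nonneg: "weighted_q n \<ge> 0"
  unfolding weighted_q_def by (intro sum_nonneg mult_nonneg_nonneg qv_nonneg R_nonneg)

lemma weighted_q_superadditive: "lam ^ k * weighted_q n \<le> weighted_q (n + k)"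
proof -
  have "lam ^ k * weighted_q n = (\<Sum>i\<in>UNIV. R i * (\<Sum>c\<in>UNIV. mat_pow M k c i * qv \<theta> n c))"
    unfolding weighted_q_def by (rule sum_mat_pow_R[symmetric])
  also have "\<dots> \<le> (\<Sum>i\<in>UNIV. R i * qv \<theta> (n + k) i)"
    by (intro sum_mono mult_left_mono qv_add_lower R_nonneg)
  finally show ?thesis by (simp add: weighted_q_def mult.commute)
qed

lemma weighted_q_subadditive: "weighted_q (n + k) \<le> weighted_q k + lam ^ k * weighted_q n"
proof -
  have "weighted_q (n + k) = (\<Sum>i\<in>UNIV. R i * qv \<theta> (n + k) i)"
    by (simp add: weighted_q_def mult.commute)
  also have "\<dots> \<le> (\<Sum>i\<in>UNIV. R i * (qv \<theta> k i + (\<Sum>c\<in>UNIV. mat_pow M k c i * qv \<theta> n c)))"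
    by (intro sum_mono mult_left_mono qv_add_upper R_nonneg)
  also have "\<dots> = (\<Sum>i\<in>UNIV. R i * qv \<theta> k i)
      + (\<Sum>i\<in>UNIV. R i * (\<Sum>c\<in>UNIV. mat_pow M k c i * qv \<theta> n c))"
    by (simp add: algebra_simps sum.distrib)
  also have "\<dots> = weighted_q k + lam ^ k * weighted_q n"
    unfolding weighted_q_def sum_mat_pow_R by (simp add: mult.commute)
  finally show ?thesis .
qed

lemma weighted_q_le: "weighted_q n \<le> lam ^ n * ln (real CARD('a))"
proof -
  have "weighted_q n \<le> (\<Sum>j\<in>UNIV. (real (ell \<theta> n j) * ln (real CARD('a))) * R j)"
    unfolding weighted_q_def by (intro sum_mono mult_right_mono qv_le_ell R_nonneg)
  also have "\<dots> = ln (real CARD('a)) * (\<Sum>j\<in>UNIV. real (ell \<theta> n j) * R j)"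
    by (simp add: sum_distrib_left algebra_simps)
  also have "\<dots> = lam ^ n * ln (real CARD('a))"
    by (simp add: sum_ell_R)
  finally show ?thesis .
qed

lemma weighted_q_norm_le: "weighted_q_norm n \<le> ln (real CARD('a))"
  using weighted_q_le[of n] lam_pos by (simp add: weighted_q_norm_def divide_le_eq mult.commute)

lemma weighted_q_norm_nonneg: "weighted_q_norm n \<ge> 0"
  using weighted_q_nonneg[of n] lam_pos by (simp add: weighted_q_norm_def)

lemma weighted_q_norm_0: "weighted_q_norm 0 = 0"
  by (simp add: weighted_q_norm_def weighted_q_def qv_0)

lemma incseq_weighted_q_norm: "incseq weighted_q_norm"
proof (rule incseq_SucI)
  fix n
  have "weighted_q_norm n = lam * weighted_q n / lam ^ Suc n"
    using lam_pos by (simp add: weighted_q_norm_def)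
  also have "\<dots> \<le> weighted_q (n + 1) / lam ^ Suc n"
    using weighted_q_superadditive[of 1 n] lam_pos by (intro divide_right_mono) simp_all
  finally show "weighted_q_norm n \<le> weighted_q_norm (Suc n)" by (simp add: weighted_q_norm_def)
qed

lemma bdd_above_weighted_q_norm: "bdd_above (range weighted_q_norm)"
  by (rule bdd_aboveI[of _ "ln (real CARD('a))"]) (auto intro: weighted_q_norm_le)

lemma weighted_q_norm_tendsto: "weighted_q_norm \<longlonglongrightarrow> s_infl"
  unfolding s_infl_def by (rule LIMSEQ_incseq_SUP[OF bdd_above_weighted_q_norm incseq_weighted_q_norm])

lemma weighted_q_norm_le_s_infl: "weighted_q_norm n \<le> s_infl"
  unfolding s_infl_def by (rule cSUP_upper[OF _ bdd_above_weighted_q_norm]) simp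

lemma s_infl_nonneg: "s_infl \<ge> 0"
  using weighted_q_norm_nonneg[of 0] weighted_q_norm_le_s_infl[of 0] by linarith

lemma s_infl_eq_SUP_from_1: "s_infl = (SUP n\<in>{1..}. weighted_q_norm n)"
proof (rule antisym)
  have bdd: "bdd_above (weighted_q_norm ` {1..})"
    using bdd_above_weighted_q_norm by (meson bdd_above_mono image_mono subset_UNIV)
  show "s_infl \<le> (SUP n\<in>{1..}. weighted_q_norm n)"
    unfolding s_infl_def
  proof (rule cSUP_least)
    fix n
    have "weighted_q_norm n \<le> weighted_q_norm (Suc n)" using incseq_weighted_q_norm by (simp add: incseq_SucD)
    also have "\<dots> \<le> (SUP m\<in>{1..}. weighted_q_norm m)" by (rule cSUP_upper[OF _ bdd]) simp
    finally show "weighted_q_norm n \<le> (SUP m\<in>{1..}. weighted_q_norm m)" .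
  qed simp
  show "(SUP n\<in>{1..}. weighted_q_norm n) \<le> s_infl"
    by (rule cSUP_least) (auto intro: weighted_q_norm_le_s_infl)
qed

lemma weighted_q_norm_mult_le:
  assumes "lam ^ m > 1"
  shows "weighted_q_norm (j * m) \<le> weighted_q m / (lam ^ m - 1) * (1 - 1 / (lam ^ m) ^ j)"
proof (induction j)
  case 0
  then show ?case by (simp add: weighted_q_norm_0)
next
  case (Suc j)
  define \<Lambda> where "\<Lambda> = lam ^ m"
  have "\<Lambda> > 1" using assms by (simp add: \<Lambda>_def)
  have pow: "lam ^ (i * m) = \<Lambda> ^ i" for i
    unfolding \<Lambda>_def by (simp add: power_mult[symmetric] mult.commute)
  have "weighted_q (Suc j * m) \<le> weighted_q m + \<Lambda> * weighted_q (j * m)"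
    using weighted_q_subadditive[of "j * m" m] by (simp add: \<Lambda>_def add.commute)
  then have "weighted_q_norm (Suc j * m) \<le> weighted_q m / \<Lambda> ^ Suc j + weighted_q_norm (j * m)"
    unfolding weighted_q_norm_def pow using \<open>\<Lambda> > 1\<close> by (simp add: field_simps)
  also have "\<dots> \<le> weighted_q m / \<Lambda> ^ Suc j + weighted_q m / (\<Lambda> - 1) * (1 - 1 / \<Lambda> ^ j)"
    using Suc.IH by (simp add: \<Lambda>_def)
  also have "\<dots> = weighted_q m / (\<Lambda> - 1) * (1 - 1 / \<Lambda> ^ Suc j)"
    using \<open>\<Lambda> > 1\<close> by (simp add: field_simps)
  finally show ?case by (simp add: \<Lambda>_def)
qed

lemma s_infl_le_weighted_q_div_if_lam_gt_1:
  assumes "lam > 1" and "m \<ge> 1"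
  shows "s_infl \<le> weighted_q m / (lam ^ m - 1)"
  unfolding s_infl_def
proof (rule cSUP_least)
  fix k
  have "lam ^ m > 1" using assms by (simp add: one_less_power)
  have "weighted_q_norm k \<le> weighted_q_norm (k * m)"
    using incseq_weighted_q_norm assms(2) by (simp add: incseq_def)
  also have "\<dots> \<le> weighted_q m / (lam ^ m - 1) * (1 - 1 / (lam ^ m) ^ k)"
    by (rule weighted_q_norm_mult_le[OF \<open>lam ^ m > 1\<close>])
  also have "\<dots> \<le> weighted_q m / (lam ^ m - 1)"
    using \<open>lam ^ m > 1\<close> weighted_q_nonneg[of m] by (intro mult_left_le) simp_all
  finally show "weighted_q_norm k \<le> weighted_q m / (lam ^ m - 1)" .
qed simp

definition infl_ratio :: "nat \<Rightarrow> 'a \<Rightarrow> real" where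
  "infl_ratio n a = qv \<theta> n a / real (ell \<theta> n a)"

lemma ell_pos: "real (ell \<theta> n a) > 0"
  using ell_ge_1[of n a] by simp

text \<open>Splitting \<open>\<vartheta>\<^sup>N\<^sup>+\<^sup>k = \<vartheta>\<^sup>N \<circ> \<vartheta>\<^sup>k\<close> compares \<open>q\<^sub>N\<^sub>+\<^sub>k\<^sub>,\<^sub>a\<close> with the following average of the
  \<open>q\<^sub>N\<^sub>,\<^sub>c\<close>.\<close>

lemma averaged_qv_tendsto:
  "(\<lambda>k. (\<Sum>c\<in>UNIV. mat_pow M k c a * qv \<theta> N c) / real (ell \<theta> (N + k) a)) \<longlonglongrightarrow> weighted_q_norm N"
proof -
  have "(\<Sum>j\<in>UNIV. real (ell \<theta> N j) * R j) \<noteq> 0"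
    using sum_ell_R[of N] lam_pos by simp
  from sum_mat_pow_ratio_tendsto[OF this, of "qv \<theta> N" a]
  have "(\<lambda>k. (\<Sum>c\<in>UNIV. qv \<theta> N c * mat_pow M k c a)
      / (\<Sum>c\<in>UNIV. real (ell \<theta> N c) * mat_pow M k c a)) \<longlonglongrightarrow> weighted_q_norm N"
    by (simp only: sum_ell_R weighted_q_norm_def weighted_q_def)
  then show ?thesis by (simp add: ell_add mult.commute)
qed

lemma averaged_qv_le_infl_ratio:
  "(\<Sum>c\<in>UNIV. mat_pow M k c a * qv \<theta> N c) / real (ell \<theta> (N + k) a) \<le> infl_ratio (N + k) a"
  unfolding infl_ratio_def using qv_add_lower ell_pos by (rule divide_right_mono[OF _ less_imp_le])

lemma infl_ratio_le_averaged_qv: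
  assumes "\<And>c. ln (real CARD('a)) \<le> \<eta> * real (ell \<theta> N c)"
  shows "infl_ratio (N + k) a
    \<le> \<eta> + (\<Sum>c\<in>UNIV. mat_pow M k c a * qv \<theta> N c) / real (ell \<theta> (N + k) a)"
proof -
  have "qv \<theta> k a \<le> (\<Sum>c\<in>UNIV. mat_pow M k c a * ln (real CARD('a)))"
    using qv_le_ell[of k a] by (simp add: ell_eq_column_sum sum_distrib_right)
  also have "\<dots> \<le> (\<Sum>c\<in>UNIV. mat_pow M k c a * (\<eta> * real (ell \<theta> N c)))"
    by (intro sum_mono mult_left_mono assms mat_pow_M_nonneg)
  also have "\<dots> = \<eta> * real (ell \<theta> (N + k) a)"
    by (simp add: ell_add sum_distrib_left algebra_simps)
  finally have "qv \<theta> k a / real (ell \<theta> (N + k) a) \<le> \<eta>"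
    using ell_pos[of "N + k" a] by (simp add: divide_le_eq)
  moreover have "infl_ratio (N + k) a
      \<le> qv \<theta> k a / real (ell \<theta> (N + k) a)
        + (\<Sum>c\<in>UNIV. mat_pow M k c a * qv \<theta> N c) / real (ell \<theta> (N + k) a)"
    unfolding infl_ratio_def add_divide_distrib[symmetric]
    using qv_add_upper ell_pos by (rule divide_right_mono[OF _ less_imp_le])
  ultimately show ?thesis by linarith
qed

lemma eventually_ln_card_le_ell:
  assumes "lam > 1" and "\<eta> > 0"
  shows "eventually (\<lambda>N. \<forall>c. ln (real CARD('a)) \<le> \<eta> * real (ell \<theta> N c)) sequentially"
proof (rule eventually_all_finite)
  fix c
  have "eventually (\<lambda>N. ln (real CARD('a)) / \<eta> \<le> real (ell \<theta> N c)) sequentially"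
    using ell_at_top[OF assms(1)] by (simp add: filterlim_at_top)
  then show "eventually (\<lambda>N. ln (real CARD('a)) \<le> \<eta> * real (ell \<theta> N c)) sequentially"
    by (rule eventually_mono) (use assms(2) in \<open>simp add: pos_divide_le_eq mult.commute\<close>)
qed
lemma infl_ratio_tendsto_if_lam_gt_1:
  assumes "lam > 1"
  shows "(\<lambda>n. infl_ratio n a) \<longlonglongrightarrow> s_infl"
proof (rule order_tendstoI)
  fix e assume "e < s_infl"
  then obtain N where N: "e < weighted_q_norm N"
    unfolding s_infl_def using less_cSUP_iff[OF _ bdd_above_weighted_q_norm] by blast
  have "eventually (\<lambda>k. e < infl_ratio (N + k) a) sequentially"
    using order_tendstoD(1)[OF averaged_qv_tendsto[of a N] N]
    by eventually_elim (rule less_le_trans[OF _ averaged_qv_le_infl_ratio])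
  then show "eventually (\<lambda>n. e < infl_ratio n a) sequentially"
    using eventually_sequentially_seg[of "\<lambda>n. e < infl_ratio n a" N] by (simp add: add.commute)
next
  fix e assume "s_infl < e"
  define \<epsilon> where "\<epsilon> = e - s_infl"
  have "\<epsilon> > 0" using \<open>s_infl < e\<close> by (simp add: \<epsilon>_def)
  obtain N where N: "\<And>c. ln (real CARD('a)) \<le> \<epsilon> / 2 * real (ell \<theta> N c)"
    using eventually_ln_card_le_ell[OF assms, of "\<epsilon> / 2"] \<open>\<epsilon> > 0\<close>
    unfolding eventually_sequentially by auto
  have "eventually (\<lambda>k. (\<Sum>c\<in>UNIV. mat_pow M k c a * qv \<theta> N c) / real (ell \<theta> (N + k) a)
      < weighted_q_norm N + \<epsilon> / 2) sequentially"
    by (rule order_tendstoD(2)[OF averaged_qv_tendsto]) (use \<open>\<epsilon> > 0\<close> in simp)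
  then have "eventually (\<lambda>k. infl_ratio (N + k) a < e) sequentially"
  proof eventually_elim
    case (elim k)
    then show ?case
      using infl_ratio_le_averaged_qv[OF N, of k a] weighted_q_norm_le_s_infl[of N]
      unfolding \<epsilon>_def by argo
  qed
  then show "eventually (\<lambda>n. infl_ratio n a < e) sequentially"
    using eventually_sequentially_seg[of "\<lambda>n. infl_ratio n a < e" N] by (simp add: add.commute)
qed
end

section \<open>Complexity of the language\<close>

definition complexity :: "('a \<Rightarrow> 'a list set) \<Rightarrow> nat \<Rightarrow> nat" where
  "complexity \<theta> l = card (language_len \<theta> l)"

lemma top_entropy_eq_complexity:
  "top_entropy \<theta> = lim (\<lambda>l. ln (real (complexity \<theta> l)) / real l)"
  by (simp add: top_entropy_def complexity_def)

lemma language_infix: "p @ v @ s \<in> language \<theta> \<Longrightarrow> v \<in> language \<theta>"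
proof -
  assume "p @ v @ s \<in> language \<theta>"
  then obtain m a w p' s' where "w \<in> subst_pow \<theta> m a" "w = p' @ (p @ v @ s) @ s'"
    unfolding language_def by blast
  then have "w \<in> subst_pow \<theta> m a \<and> w = (p' @ p) @ v @ (s @ s')" by simp
  then show ?thesis unfolding language_def by blast
qed

lemma subst_iter_subset_language: "subst_iter \<theta> n [a] \<subseteq> language \<theta>"
proof
  fix w assume "w \<in> subst_iter \<theta> n [a]"
  then have "w \<in> subst_pow \<theta> n a \<and> w = [] @ w @ []" by (simp add: subst_pow_eq_subst_iter)
  then show "w \<in> language \<theta>" unfolding language_def by blast
qed

lemma finite_language_len: "finite (language_len (\<theta> :: 'a::finite \<Rightarrow> 'a list set) l)"
  by (rule finite_subset[OF _ finite_lists_length_eq_UNIV[of l]]) (auto simp: language_len_def)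

lemma complexity_le_card_pow: "complexity (\<theta> :: 'a::finite \<Rightarrow> 'a list set) l \<le> CARD('a) ^ l"
proof -
  have "complexity \<theta> l \<le> card {xs :: 'a list. length xs = l}"
    unfolding complexity_def language_len_def
    by (rule card_mono[OF finite_lists_length_eq_UNIV]) auto
  then show ?thesis by (simp add: card_lists_length_eq_CARD)
qed

lemma complexity_submultiplicative:
  "complexity (\<theta> :: 'a::finite \<Rightarrow> 'a list set) (k + l) \<le> complexity \<theta> k * complexity \<theta> l"
proof -
  let ?split = "\<lambda>u. (take k u, drop k u)"
  have "inj_on ?split (language_len \<theta> (k + l))"
    by (rule inj_onI) (metis append_take_drop_id prod.inject)
  moreover have "?split ` language_len \<theta> (k + l) \<subseteq> language_len \<theta> k \<times> language_len \<theta> l"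
  proof (rule image_subsetI)
    fix u assume "u \<in> language_len \<theta> (k + l)"
    then have u: "u \<in> language \<theta>" "length u = k + l" by (simp_all add: language_len_def)
    have "take k u \<in> language \<theta>" "drop k u \<in> language \<theta>"
      using language_infix[of "[]" "take k u" "drop k u"] language_infix[of "take k u" "drop k u" "[]"] u(1)
      by simp_all
    then show "?split u \<in> language_len \<theta> k \<times> language_len \<theta> l"
      using u(2) by (simp add: language_len_def)
  qed
  ultimately have "card (language_len \<theta> (k + l)) \<le> card (language_len \<theta> k \<times> language_len \<theta> l)"
    by (intro card_inj_on_le) (simp_all add: finite_language_len)
  then show ?thesis unfolding complexity_def by (simp add: card_cartesian_product)
qed

lemma complexity_mult_add:
  "complexity (\<theta> :: 'a::finite \<Rightarrow> 'a list set) (t * k + r) \<le> complexity \<theta> k ^ t * complexity \<theta> r"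
proof (induction t)
  case (Suc t)
  have "complexity \<theta> (Suc t * k + r) \<le> complexity \<theta> k * complexity \<theta> (t * k + r)"
    using complexity_submultiplicative[of \<theta> k "t * k + r"] by (simp add: add.assoc)
  also have "\<dots> \<le> complexity \<theta> k * (complexity \<theta> k ^ t * complexity \<theta> r)"
    by (rule mult_left_mono[OF Suc.IH]) simp
  finally show ?case by simp
qed simp

lemma div_mult_ratio_tendsto_1:
  assumes "filterlim (\<lambda>n. real (f n)) at_top sequentially" and "k \<ge> 1"
  shows "(\<lambda>n. real (f n div k * k) / real (f n)) \<longlonglongrightarrow> 1"
proof -
  have k_div: "(\<lambda>n. real k / real (f n)) \<longlonglongrightarrow> 0"
    by (rule tendsto_divide_0[OF tendsto_const filterlim_at_top_imp_at_infinity[OF assms(1)]])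
  have "(\<lambda>n. real (f n mod k) / real (f n)) \<longlonglongrightarrow> 0"
  proof (rule tendsto_sandwich[OF _ _ tendsto_const k_div])
    show "eventually (\<lambda>n. real (f n mod k) / real (f n) \<le> real k / real (f n)) sequentially"
      using assms(2) by (intro always_eventually allI divide_right_mono) (simp_all add: less_imp_le)
  qed simp
  then have "(\<lambda>n. 1 - real (f n mod k) / real (f n)) \<longlonglongrightarrow> 1"
    using tendsto_diff[OF tendsto_const] by fastforce
  moreover have "eventually (\<lambda>n. 1 - real (f n mod k) / real (f n)
      = real (f n div k * k) / real (f n)) sequentially"
    using assms(1) unfolding filterlim_at_top
  proof (rule eventually_mono[OF spec[of _ 1]])
    fix n assume "real (f n) \<ge> 1"
    moreover have "real (f n div k * k) = real (f n) - real (f n mod k)"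
      by (metis add_diff_cancel_right' div_mult_mod_eq of_nat_add)
    ultimately show "1 - real (f n mod k) / real (f n) = real (f n div k * k) / real (f n)"
      by (simp add: diff_divide_distrib)
  qed
  ultimately show ?thesis by (rule Lim_transform_eventually)
qed

context primitive_semicompatible_subst
begin

lemma qv_le_ln_complexity: "qv \<theta> n a \<le> ln (real (complexity \<theta> (ell \<theta> n a)))"
proof -
  have "subst_iter \<theta> n [a] \<subseteq> language_len \<theta> (ell \<theta> n a)"
    unfolding language_len_def
    using subst_iter_subset_language[of \<theta> n a] length_subst_iter_letter_eq_ell[of _ n a] by blast
  then have "card (subst_iter \<theta> n [a]) \<le> complexity \<theta> (ell \<theta> n a)"
    unfolding complexity_def by (rule card_mono[OF finite_language_len])
  then show ?thesis using card_subst_iter_pos[of n "[a]"] by (simp add: qv_eq)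
qed

lemma complexity_pos:
  assumes "lam > 1"
  shows "complexity \<theta> k > 0"
proof -
  obtain a :: 'a where True by blast
  obtain n where "real k \<le> real (ell \<theta> n a)"
    using ell_at_top[OF assms, of a] unfolding filterlim_at_top eventually_sequentially by blast
  moreover obtain w where w: "w \<in> subst_iter \<theta> n [a]" using subst_iter_nonempty by blast
  ultimately have "k \<le> length w" using length_subst_iter_letter_eq_ell[OF w] by simp
  have "[] @ take k w @ drop k w \<in> language \<theta>" using w subst_iter_subset_language[of \<theta> n a] by auto
  then have "take k w \<in> language \<theta>" by (rule language_infix)
  then have "take k w \<in> language_len \<theta> k"
    using \<open>k \<le> length w\<close> by (simp add: language_len_def)
  then show ?thesis
    unfolding complexity_def using finite_language_len card_gt_0_iff by blast
qed

text \<open>Cutting a level-\<open>n\<close> inflation word into blocks of length \<open>k\<close> and a remainder.\<close>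

lemma infl_ratio_le_complexity_rate:
  assumes "lam > 1" and "k \<ge> 1"
  shows "infl_ratio n a - real k * ln (real CARD('a)) / real (ell \<theta> n a)
    \<le> ln (real (complexity \<theta> k)) / real k * (real (ell \<theta> n a div k * k) / real (ell \<theta> n a))"
proof -
  let ?K = "ln (real CARD('a))" and ?L = "ell \<theta> n a"
  define t where "t = ?L div k"
  define r where "r = ?L mod k"
  have pos: "real (complexity \<theta> j) > 0" for j using complexity_pos[OF assms(1)] by simp
  have "?L = t * k + r" by (simp add: t_def r_def)
  then have "real (complexity \<theta> ?L) \<le> real (complexity \<theta> k) ^ t * real (complexity \<theta> r)"
    by (metis complexity_mult_add of_nat_le_iff of_nat_mult of_nat_power)
  then have "ln (real (complexity \<theta> ?L))
      \<le> ln (real (complexity \<theta> k) ^ t * real (complexity \<theta> r))"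
    using pos[of ?L] by simp
  also have "\<dots> = real t * ln (real (complexity \<theta> k)) + ln (real (complexity \<theta> r))"
    using pos[of k] pos[of r] by (simp add: ln_mult ln_realpow)
  finally have "ln (real (complexity \<theta> ?L))
      \<le> real t * ln (real (complexity \<theta> k)) + ln (real (complexity \<theta> r))" .
  moreover have "ln (real (complexity \<theta> r)) \<le> real k * ?K"
  proof -
    have "real (complexity \<theta> r) \<le> real CARD('a) ^ r"
      by (metis complexity_le_card_pow of_nat_le_iff of_nat_power)
    then have "ln (real (complexity \<theta> r)) \<le> ln (real CARD('a) ^ r)"
      using pos[of r] by (simp del: of_nat_le_iff)
    also have "\<dots> = real r * ?K" by (simp add: ln_realpow)
    also have "\<dots> \<le> real k * ?K"
      using assms(2) by (intro mult_right_mono) (simp_all add: r_def less_imp_le)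
    finally show ?thesis .
  qed
  moreover have "ln (real (complexity \<theta> k)) / real k * real (t * k) = real t * ln (real (complexity \<theta> k))"
    using assms(2) by simp
  ultimately have "qv \<theta> n a - real k * ?K \<le> ln (real (complexity \<theta> k)) / real k * real (t * k)"
    using qv_le_ln_complexity[of n a] by linarith
  then show ?thesis
    using ell_pos[of n a] unfolding infl_ratio_def t_def
    by (simp add: divide_right_mono diff_divide_distrib[symmetric])
qed

lemma s_infl_le_complexity_rate:
  assumes "lam > 1" and "k \<ge> 1"
  shows "s_infl \<le> ln (real (complexity \<theta> k)) / real k"
proof -
  obtain a :: 'a where True by blast
  have "(\<lambda>n. real k * ln (real CARD('a)) / real (ell \<theta> n a)) \<longlonglongrightarrow> 0"
    by (rule tendsto_divide_0[OF tendsto_const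
          filterlim_at_top_imp_at_infinity[OF ell_at_top[OF assms(1)]]])
  then have lower: "(\<lambda>n. infl_ratio n a - real k * ln (real CARD('a)) / real (ell \<theta> n a))
      \<longlonglongrightarrow> s_infl - 0"
    by (intro tendsto_diff infl_ratio_tendsto_if_lam_gt_1[OF assms(1)])
  have upper: "(\<lambda>n. ln (real (complexity \<theta> k)) / real k
      * (real (ell \<theta> n a div k * k) / real (ell \<theta> n a))) \<longlonglongrightarrow> ln (real (complexity \<theta> k)) / real k * 1"
    by (intro tendsto_mult tendsto_const div_mult_ratio_tendsto_1 ell_at_top assms)
  have "s_infl - 0 \<le> ln (real (complexity \<theta> k)) / real k * 1"
    using infl_ratio_le_complexity_rate[OF assms]
    by (intro tendsto_le[OF _ upper lower] always_eventually allI) simp_all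
  then show ?thesis by simp
qed

end

section \<open>Legal words as windows of inflation words\<close>

lemma card_lists_length_le_bound:
  "card {xs :: 'a::finite list. length xs \<le> D} \<le> (D + 1) * CARD('a) ^ D"
proof -
  have "card {xs :: 'a list. length xs \<le> D} = (\<Sum>i\<le>D. CARD('a) ^ i)"
    using card_lists_length_le[of "UNIV :: 'a set" D] by simp
  also have "\<dots> \<le> (\<Sum>i\<le>D. CARD('a) ^ D)"
    by (intro sum_mono power_increasing) simp_all
  finally show ?thesis by simp
qed

context semicompatible_subst
begin

lemma subst_iter_infix_short_prefix:
  assumes "\<And>c. ell \<theta> n c \<le> Lmx"
  shows "w \<in> subst_iter \<theta> n v \<Longrightarrow> w = p @ u @ s
    \<Longrightarrow> \<exists>v' w' p'. w' \<in> subst_iter \<theta> n v' \<and> w' = p' @ u @ s \<and> length p' < Lmx"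
proof (induction v arbitrary: w p)
  case Nil
  have "0 < Lmx" using assms[of undefined] ell_ge_1[of n undefined] by linarith
  then show ?case using Nil by (intro exI[of _ "[]"]) simp
next
  case (Cons c v)
  from Cons.prems(1) obtain x w1 where xw: "w = x @ w1" "x \<in> subst_iter \<theta> n [c]" "w1 \<in> subst_iter \<theta> n v"
    unfolding subst_iter_Cons[of \<theta> n c v] by blast
  show ?case
  proof (cases "length p < length x")
    case True
    then show ?thesis
      using Cons.prems length_subst_iter_letter_eq_ell[OF xw(2)] assms[of c]
      by (intro exI[of _ "c # v"] exI[of _ w] exI[of _ p]) simp
  next
    case False
    then have "w1 = drop (length x) p @ u @ s" using xw(1) Cons.prems(2)
      by (metis append_eq_append_conv_if drop_append le_eq_less_or_eq not_less)
    then show ?thesis using Cons.IH[OF xw(3)] by blast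
  qed
qed

lemma subst_iter_infix_short_suffix:
  assumes "\<And>c. ell \<theta> n c \<le> Lmx"
  shows "w \<in> subst_iter \<theta> n v \<Longrightarrow> w = p @ u @ s
    \<Longrightarrow> \<exists>v' w' s'. w' \<in> subst_iter \<theta> n v' \<and> w' = p @ u @ s' \<and> length s' < Lmx"
proof (induction v arbitrary: w s rule: rev_induct)
  case Nil
  have "0 < Lmx" using assms[of undefined] ell_ge_1[of n undefined] by linarith
  then show ?case using Nil by (intro exI[of _ "[]"]) simp
next
  case (snoc c v)
  from snoc.prems(1) obtain y x where yx: "w = y @ x" "y \<in> subst_iter \<theta> n v" "x \<in> subst_iter \<theta> n [c]"
    unfolding subst_iter_append[of \<theta> n v "[c]"] by blast
  show ?case
  proof (cases "length s < length x")
    case True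
    then show ?thesis
      using snoc.prems length_subst_iter_letter_eq_ell[OF yx(3)] assms[of c]
      by (intro exI[of _ "v @ [c]"] exI[of _ w] exI[of _ s]) simp
  next
    case False
    define k where "k = length s - length x"
    have "y @ x = (p @ u @ take k s) @ drop k s"
      using yx(1) snoc.prems(2) by simp
    moreover have "length (drop k s) = length x" using False by (simp add: k_def)
    ultimately have "y = p @ u @ take k s"
      using append_eq_append_conv[of y "p @ u @ take k s" x "drop k s"] by simp
    then show ?thesis using snoc.IH[OF yx(2)] by blast
  qed
qed

text \<open>A legal word lies in some \<open>\<vartheta>\<^sup>m(a) = \<vartheta>\<^sup>n(\<vartheta>\<^sup>m\<^sup>-\<^sup>n(a))\<close>, with \<open>m \<ge> n\<close> because it is long; letters of
  \<open>v\<close> whose images miss it are then trimmed from both ends.\<close>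

lemma language_word_in_window:
  assumes "u \<in> language \<theta>" and Lmx: "\<And>c. ell \<theta> n c \<le> Lmx" and "Lmx < length u"
  obtains v w p s where "w \<in> subst_iter \<theta> n v" "w = p @ u @ s" "length p < Lmx" "length s < Lmx"
proof -
  obtain m a w p s where w: "w \<in> subst_iter \<theta> m [a]" "w = p @ u @ s"
    using assms(1) unfolding language_def subst_pow_eq_subst_iter by blast
  have "\<not> m < n"
  proof
    assume "m < n"
    then have "length w \<le> ell \<theta> n a"
      using length_subst_iter_letter_eq_ell[OF w(1)] ell_mono by simp
    then show False using w(2) Lmx[of a] \<open>Lmx < length u\<close> by simp
  qed
  then obtain v where "v \<in> subst_iter \<theta> (m - n) [a]" "w \<in> subst_iter \<theta> n v"
    using w(1) subst_iter_add[of \<theta> n "m - n" "[a]"] by auto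
  then obtain v1 w1 p1 where "w1 \<in> subst_iter \<theta> n v1" "w1 = p1 @ u @ s" "length p1 < Lmx"
    using subst_iter_infix_short_prefix[OF Lmx] w(2) by blast
  then show ?thesis
    using subst_iter_infix_short_suffix[OF Lmx] that by blast
qed

lemma language_len_subset_windows:
  fixes Lmx Lmin :: nat
  assumes Lmx: "\<And>c. ell \<theta> n c \<le> Lmx" and Lmin: "\<And>c. Lmin \<le> ell \<theta> n c" "Lmin \<ge> 1"
    and "Lmx < l"
  shows "language_len \<theta> l
    \<subseteq> (\<Union>v\<in>{v. length v \<le> (l + 2*Lmx) div Lmin \<and> (\<Sum>c\<leftarrow>v. ell \<theta> n c) < l + 2*Lmx}.
          \<Union>w\<in>subst_iter \<theta> n v. (\<lambda>j. take l (drop j w)) ` {..<Lmx})"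
proof
  fix u assume "u \<in> language_len \<theta> l"
  then have u: "u \<in> language \<theta>" "length u = l" by (simp_all add: language_len_def)
  then obtain v w p s where w: "w \<in> subst_iter \<theta> n v" "w = p @ u @ s" "length p < Lmx" "length s < Lmx"
    using language_word_in_window Lmx \<open>Lmx < l\<close> by metis
  have len: "(\<Sum>c\<leftarrow>v. ell \<theta> n c) < l + 2*Lmx"
    using length_subst_iter[OF w(1)] w(2-4) u(2) by simp
  have "length v * Lmin \<le> (\<Sum>c\<leftarrow>v. ell \<theta> n c)"
    using sum_list_mono[of v "\<lambda>_. Lmin" "ell \<theta> n", OF Lmin(1)] by (simp add: sum_list_triv)
  then have "length v \<le> (l + 2*Lmx) div Lmin"
    using len Lmin(2) by (simp add: less_eq_div_iff_mult_less_eq)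
  moreover have "u = take l (drop (length p) w)" using w(2) u(2) by simp
  ultimately show "u \<in> (\<Union>v\<in>{v. length v \<le> (l + 2*Lmx) div Lmin \<and> (\<Sum>c\<leftarrow>v. ell \<theta> n c) < l + 2*Lmx}.
          \<Union>w\<in>subst_iter \<theta> n v. (\<lambda>j. take l (drop j w)) ` {..<Lmx})"
    using w(1,3) len by blast
qed

lemma card_subst_iter_le_exp:
  assumes "\<mu> \<ge> 0" and "\<And>c. qv \<theta> n c \<le> \<mu> * real (ell \<theta> n c)" and "(\<Sum>c\<leftarrow>v. ell \<theta> n c) \<le> L"
  shows "real (card (subst_iter \<theta> n v)) \<le> exp (\<mu> * real L)"
proof -
  have "ln (real (card (subst_iter \<theta> n v))) \<le> (\<Sum>c\<leftarrow>v. \<mu> * real (ell \<theta> n c))"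
    unfolding ln_card_subst_iter by (rule sum_list_mono[OF assms(2)])
  also have "\<dots> = \<mu> * real (\<Sum>c\<leftarrow>v. ell \<theta> n c)"
    by (induction v) (simp_all add: algebra_simps)
  also have "\<dots> \<le> \<mu> * real L"
    using assms(1,3) by (intro mult_left_mono) simp_all
  finally have "exp (ln (real (card (subst_iter \<theta> n v)))) \<le> exp (\<mu> * real L)"
    by simp
  then show ?thesis using card_subst_iter_pos[of n v] by simp
qed

text \<open>Counting windows of length \<open>l\<close> in the sets \<open>\<vartheta>\<^sup>n(v)\<close> with \<open>v\<close> short enough; the bound on
  \<open>card (\<vartheta>\<^sup>n(v))\<close> comes from \<open>q\<^sub>n\<^sub>,\<^sub>c \<le> \<mu> \<ell>\<^sub>n\<^sub>,\<^sub>c\<close>.\<close>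

lemma complexity_le_window_count:
  fixes Lmx Lmin :: nat
  assumes Lmx: "\<And>c. ell \<theta> n c \<le> Lmx" and Lmin: "\<And>c. Lmin \<le> ell \<theta> n c" "Lmin \<ge> 1"
    and "Lmx < l" and "\<mu> \<ge> 0" and qv_le: "\<And>c. qv \<theta> n c \<le> \<mu> * real (ell \<theta> n c)"
  shows "real (complexity \<theta> l) \<le> real ((l + 2*Lmx) div Lmin + 1) * real CARD('a) ^ ((l + 2*Lmx) div Lmin)
            * exp (\<mu> * real (l + 2*Lmx)) * real Lmx"
proof -
  define D where "D = (l + 2*Lmx) div Lmin"
  define Vs where "Vs = {v :: 'a list. length v \<le> D \<and> (\<Sum>c\<leftarrow>v. ell \<theta> n c) < l + 2*Lmx}"
  define F where "F v = (\<Union>w\<in>subst_iter \<theta> n v. (\<lambda>j. take l (drop j w)) ` {..<Lmx})" for v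
  have "finite Vs"
    by (rule finite_subset[OF _ finite_lists_length_le[of UNIV D]]) (auto simp: Vs_def)
  have card_F: "card (F v) \<le> card (subst_iter \<theta> n v) * Lmx" and "finite (F v)" for v
  proof -
    have "card (F v) \<le> (\<Sum>w\<in>subst_iter \<theta> n v. card ((\<lambda>j. take l (drop j w)) ` {..<Lmx}))"
      unfolding F_def by (rule card_UN_le[OF finite_subst_iter])
    also have "\<dots> \<le> (\<Sum>w\<in>subst_iter \<theta> n v. Lmx)"
      by (intro sum_mono) (metis card_image_le card_lessThan finite_lessThan)
    finally show "card (F v) \<le> card (subst_iter \<theta> n v) * Lmx" by simp
    show "finite (F v)"
      unfolding F_def by (intro finite_UN_I finite_subst_iter finite_imageI) simp
  qed
  have "language_len \<theta> l \<subseteq> (\<Union>v\<in>Vs. F v)"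
    unfolding Vs_def F_def D_def by (rule language_len_subset_windows[OF Lmx Lmin \<open>Lmx < l\<close>])
  then have "complexity \<theta> l \<le> card (\<Union>v\<in>Vs. F v)"
    unfolding complexity_def using \<open>finite Vs\<close> \<open>finite (F _)\<close> by (intro card_mono) simp_all
  also have "\<dots> \<le> (\<Sum>v\<in>Vs. card (F v))"
    by (rule card_UN_le[OF \<open>finite Vs\<close>])
  also have "\<dots> \<le> (\<Sum>v\<in>Vs. card (subst_iter \<theta> n v) * Lmx)"
    by (rule sum_mono[OF card_F])
  finally have "real (complexity \<theta> l) \<le> real (\<Sum>v\<in>Vs. card (subst_iter \<theta> n v) * Lmx)"
    by (simp only: of_nat_le_iff)
  also have "\<dots> = (\<Sum>v\<in>Vs. real (card (subst_iter \<theta> n v)) * real Lmx)"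
    by simp
  also have "\<dots> \<le> (\<Sum>v\<in>Vs. exp (\<mu> * real (l + 2*Lmx)) * real Lmx)"
  proof (intro sum_mono mult_right_mono)
    show "real (card (subst_iter \<theta> n v)) \<le> exp (\<mu> * real (l + 2*Lmx))" if "v \<in> Vs" for v
      using that by (intro card_subst_iter_le_exp[OF \<open>\<mu> \<ge> 0\<close> qv_le]) (simp add: Vs_def)
  qed simp
  also have "\<dots> = real (card Vs) * (exp (\<mu> * real (l + 2*Lmx)) * real Lmx)"
    by simp
  also have "\<dots> \<le> real ((D + 1) * CARD('a) ^ D) * (exp (\<mu> * real (l + 2*Lmx)) * real Lmx)"
  proof (rule mult_right_mono)
    have "card Vs \<le> card {xs :: 'a list. length xs \<le> D}"
      by (rule card_mono) (auto simp: Vs_def intro: finite_subset[OF _ finite_lists_length_le[of UNIV D]])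
    then show "real (card Vs) \<le> real ((D + 1) * CARD('a) ^ D)"
      using card_lists_length_le_bound[of D] of_nat_le_iff order_trans by blast
  qed simp
  finally show ?thesis by (simp add: D_def algebra_simps)
qed

end

lemma ln_affine_ratio_tendsto:
  fixes c d A b :: real
  assumes "c \<ge> 0"
  shows "(\<lambda>k. (ln (real k + c) + (real k + d) * A + b) / real k) \<longlonglongrightarrow> A"
  using assms by real_asymp

context primitive_semicompatible_subst
begin

lemma ln_complexity_le_window_bound:
  fixes Lmx Lmin :: nat
  assumes "lam > 1" and Lmx: "\<And>c. ell \<theta> n c \<le> Lmx" and Lmin: "\<And>c. Lmin \<le> ell \<theta> n c" "Lmin \<ge> 1"
    and "Lmx < k" and "\<mu> \<ge> 0" and qv_le: "\<And>c. qv \<theta> n c \<le> \<mu> * real (ell \<theta> n c)"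
  shows "ln (real (complexity \<theta> k)) \<le> ln (real k + real (2*Lmx+1))
    + (real k + real (2*Lmx)) * (ln (real CARD('a)) / real Lmin + \<mu>) + ln (real Lmx)"
proof -
  let ?K = "ln (real CARD('a))"
  define D where "D = (k + 2*Lmx) div Lmin"
  have "Lmx \<ge> 1" using Lmin(1)[of undefined] Lmx[of undefined] \<open>Lmin \<ge> 1\<close> by linarith
  have "real (complexity \<theta> k) \<le> real (D + 1) * real CARD('a) ^ D * exp (\<mu> * real (k + 2*Lmx)) * real Lmx"
    unfolding D_def by (rule complexity_le_window_count[OF Lmx Lmin \<open>Lmx < k\<close> \<open>\<mu> \<ge> 0\<close> qv_le])
  then have "ln (real (complexity \<theta> k))
      \<le> ln (real (D + 1) * real CARD('a) ^ D * exp (\<mu> * real (k + 2*Lmx)) * real Lmx)"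
    using complexity_pos[OF assms(1), of k] by simp
  also have "\<dots> = ln (real (D + 1)) + real D * ?K + \<mu> * real (k + 2*Lmx) + ln (real Lmx)"
    using \<open>Lmx \<ge> 1\<close> by (simp add: ln_mult ln_realpow)
  also have "ln (real (D + 1)) \<le> ln (real k + real (2*Lmx+1))"
  proof -
    have "D \<le> k + 2 * Lmx" unfolding D_def by simp
    then show ?thesis by simp
  qed
  also have "real D * ?K \<le> (real k + real (2*Lmx)) * (?K / real Lmin)"
  proof -
    have "real D * real Lmin \<le> real k + real (2*Lmx)"
      unfolding D_def by (metis div_times_less_eq_dividend of_nat_add of_nat_le_iff of_nat_mult)
    then have "real D \<le> (real k + real (2*Lmx)) / real Lmin"
      using \<open>Lmin \<ge> 1\<close> by (simp add: le_divide_eq)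
    then have "real D * ?K \<le> ((real k + real (2*Lmx)) / real Lmin) * ?K"
      by (rule mult_right_mono) simp
    then show ?thesis by simp
  qed
  finally show ?thesis by (simp add: algebra_simps)
qed

lemma complexity_rate_eventually_less:
  assumes "lam > 1" and "\<mu> \<ge> 0" and qv_le: "\<And>c. qv \<theta> n c \<le> \<mu> * real (ell \<theta> n c)"
    and K_le: "\<And>c. ln (real CARD('a)) \<le> \<nu> * real (ell \<theta> n c)" and "\<eta> > 0"
  shows "eventually (\<lambda>k. ln (real (complexity \<theta> k)) / real k < \<nu> + \<mu> + \<eta>) sequentially"
proof -
  define Lmx where "Lmx = Max (range (ell \<theta> n))"
  define Lmin where "Lmin = Min (range (ell \<theta> n))"
  define A where "A = ln (real CARD('a)) / real Lmin + \<mu>"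
  have Lmx: "ell \<theta> n c \<le> Lmx" and Lmin: "Lmin \<le> ell \<theta> n c" for c
    unfolding Lmx_def Lmin_def by simp_all
  have "Lmin \<in> range (ell \<theta> n)" unfolding Lmin_def by (rule Min_in) auto
  then obtain c where c: "Lmin = ell \<theta> n c" by blast
  then have "Lmin \<ge> 1" using ell_ge_1 by simp
  have "A \<le> \<nu> + \<mu>"
    using K_le[of c] \<open>Lmin \<ge> 1\<close> by (simp add: A_def c divide_le_eq)
  define g where
    "g k = (ln (real k + real (2*Lmx+1)) + (real k + real (2*Lmx)) * A + ln (real Lmx)) / real k" for k
  have bound: "ln (real (complexity \<theta> k)) / real k \<le> g k" if "Lmx < k" for k
    unfolding g_def A_def using that
    by (intro divide_right_mono ln_complexity_le_window_bound[OF assms(1) Lmx Lmin \<open>Lmin \<ge> 1\<close> that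
          \<open>\<mu> \<ge> 0\<close> qv_le]) simp
  have "g \<longlonglongrightarrow> A" unfolding g_def by (rule ln_affine_ratio_tendsto) simp
  then have "eventually (\<lambda>k. g k < A + \<eta>) sequentially"
    by (rule order_tendstoD(2)) (use \<open>\<eta> > 0\<close> in simp)
  moreover have "eventually (\<lambda>k. Lmx < k) sequentially" by (rule eventually_gt_at_top)
  ultimately show ?thesis
    by eventually_elim (use bound \<open>A \<le> \<nu> + \<mu>\<close> in fastforce)
qed
lemma complexity_rate_eventually_less_s_infl:
  assumes "lam > 1" and "s_infl < e"
  shows "eventually (\<lambda>k. ln (real (complexity \<theta> k)) / real k < e) sequentially"
proof -
  define \<epsilon> where "\<epsilon> = e - s_infl"
  have "\<epsilon> > 0" using assms(2) by (simp add: \<epsilon>_def)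
  have "eventually (\<lambda>n. \<forall>c. infl_ratio n c < s_infl + \<epsilon> / 3) sequentially"
    using \<open>\<epsilon> > 0\<close>
    by (intro eventually_all_finite order_tendstoD(2)[OF infl_ratio_tendsto_if_lam_gt_1[OF assms(1)]]) simp
  moreover have "eventually (\<lambda>n. \<forall>c. ln (real CARD('a)) \<le> \<epsilon> / 3 * real (ell \<theta> n c)) sequentially"
    using \<open>\<epsilon> > 0\<close> by (intro eventually_ln_card_le_ell[OF assms(1)]) simp
  ultimately obtain n where n: "\<And>c. infl_ratio n c < s_infl + \<epsilon> / 3"
    and K_le: "\<And>c. ln (real CARD('a)) \<le> \<epsilon> / 3 * real (ell \<theta> n c)"
    using eventually_happens'[OF sequentially_bot eventually_conj] by blast
  have qv_le: "qv \<theta> n c \<le> (s_infl + \<epsilon> / 3) * real (ell \<theta> n c)" for c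
    using n[of c] ell_pos[of n c] by (simp add: infl_ratio_def divide_less_eq less_imp_le)
  have "eventually (\<lambda>k. ln (real (complexity \<theta> k)) / real k < \<epsilon> / 3 + (s_infl + \<epsilon> / 3) + \<epsilon> / 3)
      sequentially"
    using s_infl_nonneg \<open>\<epsilon> > 0\<close>
    by (intro complexity_rate_eventually_less[OF assms(1) _ qv_le K_le]) simp_all
  moreover have "\<epsilon> / 3 + (s_infl + \<epsilon> / 3) + \<epsilon> / 3 = e" by (simp add: \<epsilon>_def field_simps)
  ultimately show ?thesis by simp
qed
lemma complexity_rate_tendsto:
  assumes "lam > 1"
  shows "(\<lambda>k. ln (real (complexity \<theta> k)) / real k) \<longlonglongrightarrow> s_infl"
proof (rule order_tendstoI)
  fix e assume "e < s_infl"
  have "eventually (\<lambda>k. 1 \<le> k) sequentially" by (rule eventually_ge_at_top)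
  then show "eventually (\<lambda>k. e < ln (real (complexity \<theta> k)) / real k) sequentially"
    by (rule eventually_mono)
      (use s_infl_le_complexity_rate[OF assms] \<open>e < s_infl\<close> in \<open>fastforce intro: less_le_trans\<close>)
next
  fix e assume "s_infl < e"
  then show "eventually (\<lambda>k. ln (real (complexity \<theta> k)) / real k < e) sequentially"
    by (rule complexity_rate_eventually_less_s_infl[OF assms])
qed

section \<open>The degenerate case and the main theorem\<close>

text \<open>If \<open>\<lambda> = 1\<close>, then \<open>\<Sum>\<^sub>c \<ell>\<^sub>1\<^sub>,\<^sub>c R\<^sub>c = 1 = \<Sum>\<^sub>c R\<^sub>c\<close> with \<open>R > 0\<close> forces every \<open>\<vartheta>(c)\<close> to consist of
  one-letter words, hence (by semi-compatibility) of a single word.\<close>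

lemma ell_1_eq_1_if_lam_eq_1:
  assumes "lam = 1"
  shows "ell \<theta> 1 c = 1"
proof -
  have "(\<Sum>c\<in>UNIV. (real (ell \<theta> 1 c) - 1) * R c) = 0"
    using sum_ell_R[of 1] R_sum assms by (simp add: algebra_simps sum_subtractf)
  then have "(real (ell \<theta> 1 c) - 1) * R c = 0"
    using ell_ge_1 R_nonneg by (subst (asm) sum_nonneg_eq_0_iff) auto
  then show ?thesis using R_neq_0[of c] by simp
qed

lemma card_letter_image_eq_1_if_lam_eq_1:
  assumes "lam = 1"
  shows "card (\<theta> c) = 1"
proof -
  have letter: "\<exists>b. u = [b]" if "u \<in> \<theta> c" for u
  proof -
    have "u \<in> subst_iter \<theta> 1 [c]" using that by (simp only: subst_iter_1)
    then have "length u = 1"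
      using length_subst_iter_letter_eq_ell ell_1_eq_1_if_lam_eq_1[OF assms] by metis
    then show ?thesis by (simp add: length_Suc_conv)
  qed
  obtain u0 where u0: "u0 \<in> \<theta> c" using letter_image_nonempty by blast
  with letter obtain a where a: "u0 = [a]" by blast
  have "u = u0" if u: "u \<in> \<theta> c" for u
  proof -
    obtain b where b: "u = [b]" using letter[OF u] by blast
    have "count_list u a = count_list u0 a"
      using semi_compatible u u0 unfolding semi_compatible_def by blast
    then show ?thesis using a b by (simp split: if_splits)
  qed
  with u0 have "\<theta> c = {u0}" by blast
  then show ?thesis by simp
qed

lemma qv_eq_0_if_lam_eq_1:
  assumes "lam = 1"
  shows "qv \<theta> n c = 0"
proof (induction n arbitrary: c)
  case 0
  then show ?case by (rule qv_0)
next
  case (Suc n)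
  have "qv \<theta> 1 c = 0"
    unfolding qv_eq subst_iter_1 using card_letter_image_eq_1_if_lam_eq_1[OF assms] by simp
  then have "qv \<theta> (n + 1) c \<le> 0"
    using qv_add_upper[of n 1 c] Suc.IH by simp
  then show ?case using qv_nonneg[of "Suc n" c] by simp
qed

lemma top_entropy_eq_0_if_lam_eq_1:
  assumes "lam = 1"
  shows "top_entropy \<theta> = 0"
proof -
  have ell_eq_1: "ell \<theta> n c = 1" for n c
  proof (induction n arbitrary: c)
    case 0
    show ?case using ell_eq_column_sum[of 0 c] by simp
  next
    case (Suc n)
    have "real (ell \<theta> (n + 1) c) = real (ell \<theta> 1 c)"
      using ell_add[of n 1 c] ell_eq_column_sum[of 1 c] Suc.IH by simp
    then show ?case using ell_1_eq_1_if_lam_eq_1[OF assms] by simp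
  qed
  have "language_len \<theta> k = {}" if "k \<ge> 2" for k
  proof -
    have "length u \<le> 1" if "u \<in> language \<theta>" for u
    proof -
      obtain m a w p s where "w \<in> subst_iter \<theta> m [a]" "w = p @ u @ s"
        using \<open>u \<in> language \<theta>\<close> unfolding language_def subst_pow_eq_subst_iter by blast
      then show ?thesis using length_subst_iter_letter_eq_ell ell_eq_1 by fastforce
    qed
    then show ?thesis using that unfolding language_len_def by fastforce
  qed
  then have "eventually (\<lambda>k. ln (real (complexity \<theta> k)) / real k = 0) sequentially"
    unfolding eventually_sequentially complexity_def by (intro exI[of _ 2]) simp
  then have "(\<lambda>k. ln (real (complexity \<theta> k)) / real k) \<longlonglongrightarrow> 0"
    by (rule tendsto_eventually)
  then show ?thesis unfolding top_entropy_eq_complexity by (rule limI)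
qed

lemma top_entropy_eq_s_infl: "top_entropy \<theta> = s_infl"
proof (cases "lam > 1")
  case True
  then show ?thesis
    unfolding top_entropy_eq_complexity by (rule limI[OF complexity_rate_tendsto])
next
  case False
  then have "lam = 1" using lam_ge_1 by simp
  then show ?thesis
    by (simp add: top_entropy_eq_0_if_lam_eq_1 s_infl_def weighted_q_norm_def weighted_q_def qv_eq_0_if_lam_eq_1)
qed

lemma infl_ratio_tendsto: "(\<lambda>n. infl_ratio n a) \<longlonglongrightarrow> s_infl"
proof (cases "lam > 1")
  case True
  then show ?thesis by (rule infl_ratio_tendsto_if_lam_gt_1)
next
  case False
  then have "lam = 1" using lam_ge_1 by simp
  then show ?thesis
    by (simp add: s_infl_def weighted_q_norm_def weighted_q_def infl_ratio_def qv_eq_0_if_lam_eq_1)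
qed

lemma s_infl_le_weighted_q_div:
  assumes "m \<ge> 1"
  shows "s_infl \<le> weighted_q m / (lam ^ m - 1)"
proof (cases "lam > 1")
  case True
  then show ?thesis using assms by (rule s_infl_le_weighted_q_div_if_lam_gt_1)
next
  case False
  then have "lam = 1" using lam_ge_1 by simp
  then show ?thesis by (simp add: s_infl_def weighted_q_norm_def weighted_q_def qv_eq_0_if_lam_eq_1)
qed

end

theorem mainTheorem8:
  fixes \<theta> :: "'a::finite \<Rightarrow> 'a list set" and R :: "'a \<Rightarrow> real"
  assumes "random_subst \<theta>" and "semi_compatible \<theta>" and "primitive_subst \<theta>"
    and "is_right_pf_vector (subst_matrix \<theta>) R"
  defines "lam \<equiv> pf_eigenvalue (subst_matrix \<theta>)"
    and "s \<equiv> top_entropy \<theta>"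
    and "qR \<equiv> (\<lambda>m. (\<Sum>j\<in>UNIV. qv \<theta> m j * R j))"
  shows "(\<forall>i. \<forall>m\<ge>1.
            ereal (qR m / lam ^ m) \<le> lower_infl_entropy \<theta> i
          \<and> lower_infl_entropy \<theta> i \<le> upper_infl_entropy \<theta> i
          \<and> upper_infl_entropy \<theta> i \<le> ereal s
          \<and> s \<le> qR m / (lam ^ m - 1))
       \<and> (\<forall>i. (\<lambda>m. qv \<theta> m i / real (ell \<theta> m i)) \<longlonglongrightarrow> s)
       \<and> (\<lambda>m. qR m / lam ^ m) \<longlonglongrightarrow> s
       \<and> s = (SUP m\<in>{1..}. qR m / lam ^ m)"
proof -
  interpret primitive_semicompatible_subst \<theta> R
    using assms(1-4) by unfold_locales
  have qR: "qR = weighted_q" and s: "s = s_infl"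
    by (simp_all add: assms(6,7) weighted_q_def top_entropy_eq_s_infl fun_eq_iff)
  have qR_norm: "qR m / lam ^ m = weighted_q_norm m" for m
    by (simp add: qR assms(5) weighted_q_norm_def)
  have ratio: "(\<lambda>m. qv \<theta> m i / real (ell \<theta> m i)) \<longlonglongrightarrow> s" for i
    using infl_ratio_tendsto by (simp add: s infl_ratio_def)
  have "lower_infl_entropy \<theta> i = ereal s" "upper_infl_entropy \<theta> i = ereal s" for i
    unfolding lower_infl_entropy_def upper_infl_entropy_def
    by (intro lim_imp_Liminf lim_imp_Limsup tendsto_ereal[OF ratio] trivial_limit_sequentially)+
  moreover have "s \<le> qR m / (lam ^ m - 1)" if "m \<ge> 1" for m
    using s_infl_le_weighted_q_div[OF that] by (simp add: s qR assms(5))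
  moreover have "s = (SUP m\<in>{1..}. qR m / lam ^ m)"
    using s_infl_eq_SUP_from_1 by (simp add: s qR_norm)
  ultimately show ?thesis
    using ratio weighted_q_norm_tendsto weighted_q_norm_le_s_infl by (simp add: s qR_norm)
qed

end
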